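(* Consider the linear equation $u_t+u_x=0$ on $\Omega=[a,b]$ with periodic (or compactly supported) boundary conditions, with square entropy $U(u)=u^2/2$, and suppose the exact solution $u$ is smooth on $\Omega\times[0,T]$. Let $u_h$ be the solution of the semi-discrete NOES-DG scheme described in the context, with initial data the $L^2$ projection of $u_0=u(\cdot,0)$ onto $V_h^k$, i.e. $\int_{K_i}u_h(x,0)\phi(x)\,\mathrm dx=\int_{K_i}u_0(x)\phi(x)\,\mathrm dx$ for all cells $K_i$ and all $\phi\in V_h^k$. Then there is a constant $M$ independent of $h$ such that for $t\in[0,T]$, $$\|u(\cdot,t)-u_h(\cdot,t)\|_{L^2(\Omega)}\le M h^{k+1}.$$
   Context: Mesh: $a=x_{1/2}<\dots<x_{N+1/2}=b$, uniform, cells $K_i=[x_{i-1/2},x_{i+1/2}]$, $h=x_{i+1/2}-x_{i-1/2}$, midpoint $x_i$. For $k\ge1$, $V_h^k=\{w: w|_{K_i}\in P^k(K_i)\ \forall i\}$. Traces $w^\mp_{i+1/2}$ at $x_{i+1/2}$ from $K_i$ / $K_{i+1}$, jump $[\![w]\!]_{i+1/2}=w^+_{i+1/2}-w^-_{i+1/2}$; periodic indices modulo $N$. Here $f(u)=u$, $U=u^2/2$, so the entropy variable is $v(u)=u$, $A(u)=1/U''(u)=1$, entropy flux $F(u)=u^2/2$, and the Gauss–Lobatto interpolant $v_h$ of $v(u_h)$ equals $u_h$. Numerical flux: local Lax–Friedrichs $\hat f(u^-,u^+)=\tfrac12(u^++u^-)-\tfrac12(u^+-u^-)$ (i.e. $\hat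 f=u^-$) with splitting $\hat f^C=\tfrac12(u^++u^-)$, $\hat f^D=-\tfrac12(u^+-u^-)$; numerical entropy flux $\hat F(u^-,u^+)=\tfrac12(F(u^+)+F(u^-))$. NOES-DG scheme: for all $w\in V_h^k$ and all $i$, $$\int_{K_i}\partial_t u_h\,w\,\mathrm dx=\int_{K_i}u_h\,\partial_x w\,\mathrm dx-\hat f_{i+1/2}w^-_{i+1/2}+\hat f_{i-1/2}w^+_{i-1/2}-\sigma_i\int_{K_i}\nu_i\,\partial_x u_h\,\partial_x w\,\mathrm dx,$$ with $\hat f_{i+1/2}=\hat f(u_h|^-_{i+1/2},u_h|^+_{i+1/2})$, $\nu_i(x)=1-\big(\tfrac{x-x_i}{h/2}\big)^2$, and $\sigma_i=\max\{\sigma_i^{jump},\sigma_i^{entropy}\}$, where $\sigma_i^{jump}=c_0\big(h\|[\![u_h]\!]\|_{\partial K_i}+\sum_{l=1}^k l(l+1)h^{l+1}\|[\![\partial_x^l u_h]\!]\|_{\partial K_i}\big)$ with $\|[\![\partial_x^lu_h]\!]\|_{\partial K_i}=|[\![\partial_x^lu_h]\!]_{i-1/2}|+|[\![\partial_x^lu_h]\!]_{i+1/2}|$ and a constant $c_0>0$; $\sigma_i^{entropy}=\min\{\max\{F_i/E_i,0\},C\sigma_i^{jump}\}$ with a constant $C>1$, $E_i=\int_{K_i}\nu_i(\partial_xu_h)^2\,\mathrm dx$, $F_i=\hat F_{i+1/2}-\hat F_{i-1/2}-\hat f^C_{i+1/2}u_h|^-_{i+1/2}+\hat f^C_{i-1/2}u_h|^+_{i-1/2}+\int_{K_i}u_h\partial_xu_h\,\mathrm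 dx$. *)

theory Defs
  imports "HOL-Analysis.Analysis" "HOL-Computational_Algebra.Polynomial"
begin

definition Dx :: "(real \<Rightarrow> real \<Rightarrow> real) \<Rightarrow> real \<Rightarrow> real \<Rightarrow> real" where
  "Dx f x t = deriv (\<lambda>y. f y t) x"

definition Dt :: "(real \<Rightarrow> real \<Rightarrow> real) \<Rightarrow> real \<Rightarrow> real \<Rightarrow> real" where
  "Dt f x t = deriv (\<lambda>s. f x s) t"

fun pderivs :: "bool list \<Rightarrow> (real \<Rightarrow> real \<Rightarrow> real) \<Rightarrow> (real \<Rightarrow> real \<Rightarrow> real)" where
  "pderivs [] f = f"
| "pderivs (d # ds) f = (if d then Dx else Dt) (pderivs ds f)"

definition smooth2 :: "(real \<Rightarrow> real \<Rightarrow> real) \<Rightarrow> bool" where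
  "smooth2 f \<longleftrightarrow> (\<forall>ds p. (\<lambda>q::real \<times> real. pderivs ds f (fst q) (snd q)) differentiable (at p))"

section \<open>Mesh (cells indexed 0..N-1, periodic)\<close>

definition hh :: "real \<Rightarrow> real \<Rightarrow> nat \<Rightarrow> real" where
  "hh a b N = (b - a) / real N"

definition xL :: "real \<Rightarrow> real \<Rightarrow> nat \<Rightarrow> nat \<Rightarrow> real" where
  "xL a b N i = a + real i * hh a b N"

definition xR :: "real \<Rightarrow> real \<Rightarrow> nat \<Rightarrow> nat \<Rightarrow> real" where
  "xR a b N i = a + real (Suc i) * hh a b N"

definition xM :: "real \<Rightarrow> real \<Rightarrow> nat \<Rightarrow> nat \<Rightarrow> real" where
  "xM a b N i = a + (real i + 1/2) * hh a b N"

definition nxt :: "nat \<Rightarrow> nat \<Rightarrow> nat" where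
  "nxt N i = Suc i mod N"

definition prv :: "nat \<Rightarrow> nat \<Rightarrow> nat" where
  "prv N i = (i + N - 1) mod N"

definition nu :: "real \<Rightarrow> real \<Rightarrow> nat \<Rightarrow> nat \<Rightarrow> real \<Rightarrow> real" where
  "nu a b N i x = 1 - ((x - xM a b N i) / (hh a b N / 2))\<^sup>2"

text \<open>A discrete state U assigns to every cell i a polynomial U i (the restriction of u_h to K_i).
  Interface j is the right end x_{j+1/2} of cell j; its right neighbour is cell nxt N j.\<close>

definition tr_m :: "real \<Rightarrow> real \<Rightarrow> nat \<Rightarrow> (nat \<Rightarrow> real poly) \<Rightarrow> nat \<Rightarrow> real" where
  "tr_m a b N U j = poly (U j) (xR a b N j)"

definition tr_p :: "real \<Rightarrow> real \<Rightarrow> nat \<Rightarrow> (nat \<Rightarrow> real poly) \<Rightarrow> nat \<Rightarrow> real" where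
  "tr_p a b N U j = poly (U (nxt N j)) (xL a b N (nxt N j))"

definition jmp :: "real \<Rightarrow> real \<Rightarrow> nat \<Rightarrow> (nat \<Rightarrow> real poly) \<Rightarrow> nat \<Rightarrow> nat \<Rightarrow> real" where
  "jmp a b N U l j = poly ((pderiv ^^ l) (U (nxt N j))) (xL a b N (nxt N j))
                   - poly ((pderiv ^^ l) (U j)) (xR a b N j)"

definition jnorm :: "real \<Rightarrow> real \<Rightarrow> nat \<Rightarrow> (nat \<Rightarrow> real poly) \<Rightarrow> nat \<Rightarrow> nat \<Rightarrow> real" where
  "jnorm a b N U l i = \<bar>jmp a b N U l (prv N i)\<bar> + \<bar>jmp a b N U l i\<bar>"

definition sigma_jump :: "real \<Rightarrow> nat \<Rightarrow> real \<Rightarrow> real \<Rightarrow> nat \<Rightarrow> (nat \<Rightarrow> real poly) \<Rightarrow> nat \<Rightarrow> real" where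
  "sigma_jump c0 k a b N U i =
     c0 * (hh a b N * jnorm a b N U 0 i
           + (\<Sum>l=1..k. real l * real (l + 1) * hh a b N ^ (l + 1) * jnorm a b N U l i))"

text \<open>Fluxes for f(u)=u: LLF flux (= upwind value u^-), central part, entropy flux.\<close>
definition fhat :: "real \<Rightarrow> real \<Rightarrow> nat \<Rightarrow> (nat \<Rightarrow> real poly) \<Rightarrow> nat \<Rightarrow> real" where
  "fhat a b N U j = (tr_p a b N U j + tr_m a b N U j) / 2 - (tr_p a b N U j - tr_m a b N U j) / 2"

definition fC :: "real \<Rightarrow> real \<Rightarrow> nat \<Rightarrow> (nat \<Rightarrow> real poly) \<Rightarrow> nat \<Rightarrow> real" where
  "fC a b N U j = (tr_p a b N U j + tr_m a b N U j) / 2"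

definition Fhat :: "real \<Rightarrow> real \<Rightarrow> nat \<Rightarrow> (nat \<Rightarrow> real poly) \<Rightarrow> nat \<Rightarrow> real" where
  "Fhat a b N U j = ((tr_p a b N U j)\<^sup>2 / 2 + (tr_m a b N U j)\<^sup>2 / 2) / 2"

definition Ecell :: "real \<Rightarrow> real \<Rightarrow> nat \<Rightarrow> (nat \<Rightarrow> real poly) \<Rightarrow> nat \<Rightarrow> real" where
  "Ecell a b N U i = integral {xL a b N i .. xR a b N i}
      (\<lambda>x. nu a b N i x * (poly (pderiv (U i)) x)\<^sup>2)"

definition Fcell :: "real \<Rightarrow> real \<Rightarrow> nat \<Rightarrow> (nat \<Rightarrow> real poly) \<Rightarrow> nat \<Rightarrow> real" where
  "Fcell a b N U i = Fhat a b N U i - Fhat a b N U (prv N i)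
      - fC a b N U i * tr_m a b N U i + fC a b N U (prv N i) * tr_p a b N U (prv N i)
      + integral {xL a b N i .. xR a b N i} (\<lambda>x. poly (U i) x * poly (pderiv (U i)) x)"

definition sigma_ent :: "real \<Rightarrow> real \<Rightarrow> nat \<Rightarrow> real \<Rightarrow> real \<Rightarrow> nat \<Rightarrow> (nat \<Rightarrow> real poly) \<Rightarrow> nat \<Rightarrow> real" where
  "sigma_ent c0 C k a b N U i =
     min (max (Fcell a b N U i / Ecell a b N U i) 0) (C * sigma_jump c0 k a b N U i)"

definition sigma :: "real \<Rightarrow> real \<Rightarrow> nat \<Rightarrow> real \<Rightarrow> real \<Rightarrow> nat \<Rightarrow> (nat \<Rightarrow> real poly) \<Rightarrow> nat \<Rightarrow> real" where
  "sigma c0 C k a b N U i = max (sigma_jump c0 k a b N U i) (sigma_ent c0 C k a b N U i)"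

text \<open>The NOES-DG cell equation on cell i, for state U with time derivative Ut, tested with
  the polynomial w (= restriction of the test function to K_i).\<close>
definition noes_eq :: "real \<Rightarrow> real \<Rightarrow> nat \<Rightarrow> real \<Rightarrow> real \<Rightarrow> nat \<Rightarrow> (nat \<Rightarrow> real poly) \<Rightarrow> (nat \<Rightarrow> real poly)
     \<Rightarrow> nat \<Rightarrow> real poly \<Rightarrow> bool" where
  "noes_eq c0 C k a b N U Ut i w \<longleftrightarrow>
     integral {xL a b N i .. xR a b N i} (\<lambda>x. poly (Ut i) x * poly w x)
     = integral {xL a b N i .. xR a b N i} (\<lambda>x. poly (U i) x * poly (pderiv w) x)
       - fhat a b N U i * poly w (xR a b N i)
       + fhat a b N U (prv N i) * poly w (xL a b N i)
       - sigma c0 C k a b N U i *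
           integral {xL a b N i .. xR a b N i}
             (\<lambda>x. nu a b N i x * poly (pderiv (U i)) x * poly (pderiv w) x)"

definition l2err :: "real \<Rightarrow> real \<Rightarrow> nat \<Rightarrow> (real \<Rightarrow> real) \<Rightarrow> (nat \<Rightarrow> real poly) \<Rightarrow> real" where
  "l2err a b N v U = sqrt (\<Sum>i<N. integral {xL a b N i .. xR a b N i} (\<lambda>x. (v x - poly (U i) x)\<^sup>2))"

end

theory Submission
  imports Defs
begin

text \<open>Let \<open>P\<^sup>-\<close> be the Gauss--Radau projection on each cell (interpolating at the upwind end point,
  orthogonal to polynomials of degree \<open>< k\<close>) and \<open>\<xi> = P\<^sup>- u - u\<^sub>h\<close>.  Testing the scheme with
  \<open>\<xi>\<close> and subtracting the same identity for \<open>P\<^sup>- u\<close>, which the exact solution satisfies up to the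
  \<open>O(h\<^sup>k\<^sup>+\<^sup>1)\<close> defect of \<open>\<partial>\<^sub>t P\<^sup>- u\<close>, the flux terms telescope over the periodic mesh into
  dissipative jump terms.  The viscosity contributes at most \<open>\<sigma> \<integral> \<nu> (P\<^sup>- u)' \<xi>'\<close>; here \<open>(P\<^sup>- u)'\<close>
  is bounded, and \<open>\<sigma> \<le> C \<sigma>\<^sup>j\<^sup>u\<^sup>m\<^sup>p\<close> only sees the jumps of \<open>u\<^sub>h\<close>, which are the jumps of \<open>u\<^sub>h - T\<close> for
  Taylor polynomials \<open>T\<close> of \<open>u\<close> and hence, by the inverse inequality, bounded in terms of
  \<open>\<parallel>\<xi>\<parallel>\<^sup>2 + h\<^sup>2\<^sup>k\<^sup>+\<^sup>2\<close>.  So \<open>d/dt \<parallel>\<xi>\<parallel>\<^sup>2 \<le> A (\<parallel>\<xi>\<parallel>\<^sup>2 + h\<^sup>2\<^sup>k\<^sup>+\<^sup>2)\<close>, and Gronwall's lemma,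
  \<open>\<xi>(0) = O(h\<^sup>k\<^sup>+\<^sup>1)\<close> and the approximation property of \<open>P\<^sup>-\<close> give the estimate.\<close>

section \<open>Orthogonal polynomials on the unit interval\<close>

lemma integral_rescale_unit:
  fixes F :: "real \<Rightarrow> real"
  assumes h: "0 < h" and F: "continuous_on {al..al + h} F"
  shows "integral {al..al + h} F = h * integral {0..1} (\<lambda>s. F (al + h * s))"
proof -
  have "(F has_integral integral {al..al + h} F) (cbox al (al + h))"
    using integrable_continuous_interval[OF F] by (simp add: has_integral_integral)
  from has_integral_affinity'[OF this h, of al]
  have "((\<lambda>s. F (h * s + al)) has_integral integral {al..al + h} F / h) {0..1}"
    using h by (simp add: divide_simps)
  hence "integral {0..1} (\<lambda>s. F (h * s + al)) = integral {al..al + h} F / h"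
    by (simp add: integral_unique)
  thus ?thesis using h by (simp add: field_simps add.commute)
qed

lemma poly_eq_0_if_zero_on_unit:
  fixes q :: "real poly"
  assumes "\<And>x. 0 < x \<Longrightarrow> x < 1 \<Longrightarrow> poly q x = 0"
  shows "q = 0"
proof (rule ccontr)
  assume "q \<noteq> 0"
  hence "finite {x. poly q x = 0}" by (rule poly_roots_finite)
  moreover have "{0<..<(1::real)} \<subseteq> {x. poly q x = 0}" using assms by auto
  ultimately have "finite {0<..<(1::real)}" by (rule finite_subset[rotated])
  thus False using infinite_Ioo[of "0::real" 1] by simp
qed

lemma integral_unit_eq_0_imp_zero:
  fixes f :: "real \<Rightarrow> real"
  assumes f: "continuous_on {0..1} f" and nonneg: "\<And>x. 0 \<le> x \<Longrightarrow> x \<le> 1 \<Longrightarrow> 0 \<le> f x"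
    and int0: "integral {0..1} f = 0" and x: "0 \<le> x" "x \<le> 1"
  shows "f x = 0"
proof -
  have "(f has_integral 0) (cbox 0 1)"
    using integrable_continuous_interval[OF f] int0 by (metis box_real(2) has_integral_integral)
  from has_integral_0_cbox_imp_0[OF _ _ this, of x] f nonneg x show ?thesis by auto
qed

definition inner01 :: "real poly \<Rightarrow> real poly \<Rightarrow> real" where
  "inner01 p q = integral {0..1} (\<lambda>s. poly p s * poly q s)"

lemma integrable_unit_mult_poly:
  "continuous_on {0..1} g \<Longrightarrow> (\<lambda>s. g s * poly q s) integrable_on {0..(1::real)}"
  by (intro integrable_continuous_interval continuous_intros) auto

lemma integrable_unit_poly_mult_poly: "(\<lambda>s. poly p s * poly q s) integrable_on {0..(1::real)}"
  by (intro integrable_unit_mult_poly continuous_intros)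

lemma inner01_commute: "inner01 p q = inner01 q p"
  unfolding inner01_def by (simp add: mult.commute)

lemma inner01_add_left: "inner01 (p + q) r = inner01 p r + inner01 q r"
  unfolding inner01_def
  by (simp add: distrib_right integral_add[OF integrable_unit_poly_mult_poly integrable_unit_poly_mult_poly])

lemma inner01_diff_left: "inner01 (p - q) r = inner01 p r - inner01 q r"
  unfolding inner01_def
  by (simp add: left_diff_distrib integral_diff[OF integrable_unit_poly_mult_poly integrable_unit_poly_mult_poly])

lemma inner01_smult_left: "inner01 (smult c p) r = c * inner01 p r"
  unfolding inner01_def by (simp add: mult.assoc)

lemma inner01_sum_left: "inner01 (\<Sum>j\<in>A. f j) r = (\<Sum>j\<in>A. inner01 (f j) r)"
  by (induction A rule: infinite_finite_induct) (auto simp: inner01_add_left, simp_all add: inner01_def)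

lemma inner01_self_pos:
  assumes "p \<noteq> 0" shows "0 < inner01 p p"
proof -
  have nonneg: "0 \<le> inner01 p p"
    unfolding inner01_def by (rule integral_nonneg[OF integrable_unit_poly_mult_poly]) simp
  have "inner01 p p \<noteq> 0"
  proof
    assume "inner01 p p = 0"
    hence "poly p x * poly p x = 0" if "0 < x" "x < 1" for x
      using that by (intro integral_unit_eq_0_imp_zero[where f = "\<lambda>s. poly p s * poly p s"])
        (auto simp: inner01_def intro!: continuous_intros)
    with assms poly_eq_0_if_zero_on_unit show False by auto
  qed
  with nonneg show ?thesis by simp
qed

fun orth_poly :: "nat \<Rightarrow> real poly" where
  "orth_poly n = monom 1 n
     - (\<Sum>j<n. smult (inner01 (monom 1 n) (orth_poly j) / inner01 (orth_poly j) (orth_poly j))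
                      (orth_poly j))"

declare orth_poly.simps [simp del]

lemma orth_poly_monic: "degree (orth_poly n) = n \<and> coeff (orth_poly n) n = 1"
proof (induction n rule: less_induct)
  case (less n)
  let ?S = "\<Sum>j<n. smult (inner01 (monom 1 n) (orth_poly j) / inner01 (orth_poly j) (orth_poly j))
                         (orth_poly j)"
  have "coeff ?S n = 0"
  proof (cases "n = 0")
    case False
    have "degree ?S < n"
      by (rule degree_sum_less) (use less False in auto)
    thus ?thesis by (simp add: coeff_eq_0)
  qed simp
  hence lead: "coeff (orth_poly n) n = 1" by (subst orth_poly.simps) simp
  have "degree ?S \<le> n"
    by (rule degree_sum_le) (use less in \<open>auto simp: less_imp_le\<close>)
  hence "degree (orth_poly n) \<le> n"
    by (subst orth_poly.simps) (intro degree_diff_le, auto simp: degree_monom_le)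
  moreover have "n \<le> degree (orth_poly n)" using lead by (intro le_degree) simp
  ultimately show ?case using lead by simp
qed

lemma degree_orth_poly [simp]: "degree (orth_poly n) = n"
  using orth_poly_monic by blast

lemma coeff_orth_poly_degree [simp]: "coeff (orth_poly n) n = 1"
  using orth_poly_monic by blast

lemma orth_poly_nonzero: "orth_poly n \<noteq> 0"
  using coeff_orth_poly_degree[of n] by (metis coeff_0 zero_neq_one)

definition orth_sqnorm :: "nat \<Rightarrow> real" where
  "orth_sqnorm m = inner01 (orth_poly m) (orth_poly m)"

lemma orth_sqnorm_pos: "0 < orth_sqnorm m"
  unfolding orth_sqnorm_def by (rule inner01_self_pos[OF orth_poly_nonzero])

lemma inner01_orth_poly_less: "m < n \<Longrightarrow> inner01 (orth_poly n) (orth_poly m) = 0"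
proof (induction n arbitrary: m rule: less_induct)
  case (less n)
  have orth: "inner01 (orth_poly j) (orth_poly m) = 0" if "j < n" "j \<noteq> m" for j
    using less.IH[of j m] less.IH[of m j] less.prems that by (cases "m < j") (auto simp: inner01_commute)
  have "inner01 (orth_poly n) (orth_poly m) = inner01 (monom 1 n) (orth_poly m)
        - (\<Sum>j<n. inner01 (monom 1 n) (orth_poly j) / orth_sqnorm j * inner01 (orth_poly j) (orth_poly m))"
    by (subst orth_poly.simps) (simp only: inner01_diff_left inner01_sum_left inner01_smult_left orth_sqnorm_def)
  also have "(\<Sum>j<n. inner01 (monom 1 n) (orth_poly j) / orth_sqnorm j * inner01 (orth_poly j) (orth_poly m))
       = inner01 (monom 1 n) (orth_poly m) / orth_sqnorm m * orth_sqnorm m"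
    by (subst sum.remove[of _ m]) (use less.prems orth in \<open>auto simp: orth_sqnorm_def intro!: sum.neutral\<close>)
  finally show ?case using orth_sqnorm_pos[of m] by simp
qed

lemma inner01_orth_poly: "m \<noteq> n \<Longrightarrow> inner01 (orth_poly m) (orth_poly n) = 0"
  using inner01_orth_poly_less[of m n] inner01_orth_poly_less[of n m]
  by (cases "m < n") (auto simp: inner01_commute)

lemma orth_poly_span:
  "degree p \<le> k \<Longrightarrow> \<exists>\<beta>. p = (\<Sum>m\<le>k. smult (\<beta> m) (orth_poly m))"
proof (induction k arbitrary: p)
  case 0
  then obtain c where "p = [:c:]" by (metis degree_eq_zeroE le_zero_eq)
  moreover have "orth_poly 0 = 1" by (subst orth_poly.simps) (simp add: monom_0 one_pCons)
  ultimately show ?case by (intro exI[of _ "\<lambda>_. c"]) (simp add: one_pCons)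
next
  case (Suc k)
  define q where "q = p - smult (coeff p (Suc k)) (orth_poly (Suc k))"
  have "degree q \<le> Suc k" unfolding q_def
    by (rule degree_diff_le) (use Suc.prems in auto)
  moreover have "coeff q (Suc k) = 0" unfolding q_def by simp
  ultimately have "degree q \<le> k"
    by (metis eq_zero_or_degree_less leading_coeff_0_iff less_Suc_eq_le not_less_eq_eq le_antisym
              degree_0 zero_le)
  then obtain \<beta> where \<beta>: "q = (\<Sum>m\<le>k. smult (\<beta> m) (orth_poly m))" using Suc.IH by blast
  show ?case
    by (rule exI[of _ "\<beta>(Suc k := coeff p (Suc k))"]) (simp add: \<beta>[symmetric] q_def)
qed

definition fourier_coeff :: "(real \<Rightarrow> real) \<Rightarrow> nat \<Rightarrow> real" where
  "fourier_coeff g m = integral {0..1} (\<lambda>s. g s * poly (orth_poly m) s) / orth_sqnorm m"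

lemma fourier_coeff_poly: "fourier_coeff (poly p) m = inner01 p (orth_poly m) / orth_sqnorm m"
  unfolding fourier_coeff_def inner01_def ..

lemma inner01_orth_expansion:
  assumes "j \<le> k"
  shows "inner01 (\<Sum>m\<le>k. smult (\<beta> m) (orth_poly m)) (orth_poly j) = \<beta> j * orth_sqnorm j"
proof -
  have "inner01 (\<Sum>m\<le>k. smult (\<beta> m) (orth_poly m)) (orth_poly j)
      = (\<Sum>m\<le>k. \<beta> m * inner01 (orth_poly m) (orth_poly j))"
    by (simp add: inner01_sum_left inner01_smult_left)
  also have "\<dots> = \<beta> j * orth_sqnorm j"
    by (subst sum.remove[of _ j]) (use assms in \<open>auto simp: orth_sqnorm_def inner01_orth_poly\<close>)
  finally show ?thesis .
qed

lemma orth_expansion: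
  assumes "degree p \<le> k"
  shows "p = (\<Sum>m\<le>k. smult (fourier_coeff (poly p) m) (orth_poly m))"
proof -
  obtain \<beta> where \<beta>: "p = (\<Sum>m\<le>k. smult (\<beta> m) (orth_poly m))"
    using orth_poly_span[OF assms] by blast
  have "fourier_coeff (poly p) m = \<beta> m" if "m \<le> k" for m
    using inner01_orth_expansion[OF that, of \<beta>] \<beta> orth_sqnorm_pos[of m] by (simp add: fourier_coeff_poly)
  hence "(\<Sum>m\<le>k. smult (fourier_coeff (poly p) m) (orth_poly m)) = (\<Sum>m\<le>k. smult (\<beta> m) (orth_poly m))"
    by (intro sum.cong) auto
  with \<beta> show ?thesis by simp
qed

lemma inner01_orth_poly_low_degree:
  assumes "degree q < n" shows "inner01 (orth_poly n) q = 0"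
proof -
  have q: "q = (\<Sum>m\<le>n - 1. smult (fourier_coeff (poly q) m) (orth_poly m))"
    using assms by (intro orth_expansion) simp
  have "inner01 (orth_poly m) (orth_poly n) = 0" if "m \<le> n - 1" for m
    using that assms by (intro inner01_orth_poly) auto
  hence "inner01 q (orth_poly n) = 0"
    by (subst q) (simp add: inner01_sum_left inner01_smult_left)
  thus ?thesis by (simp add: inner01_commute)
qed

text \<open>If \<open>orth_poly k\<close> vanished at \<open>1\<close>, then \<open>orth_poly k = (x - 1) q\<close> with \<open>deg q < k\<close>, and
  orthogonality to \<open>q\<close> would give \<open>\<integral>\<^sub>0\<^sup>1 (1 - x) q\<^sup>2 = 0\<close>.  This is what makes the
  Gauss--Radau projection below well defined.\<close>

lemma poly_orth_poly_1_nonzero: "poly (orth_poly k) 1 \<noteq> 0"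
proof
  assume "poly (orth_poly k) 1 = 0"
  then obtain q where q: "orth_poly k = [:-1, 1:] * q"
    using poly_eq_0_iff_dvd[of "orth_poly k" 1] by auto
  have "q \<noteq> 0" using q orth_poly_nonzero[of k] by auto
  hence "degree ([:-1, 1:] * q) = degree [:-1, 1::real:] + degree q"
    by (intro degree_mult_eq) auto
  hence "degree (orth_poly k) = 1 + degree q" unfolding q by simp
  hence "inner01 (orth_poly k) q = 0" by (intro inner01_orth_poly_low_degree) simp
  hence "integral {0..1} (\<lambda>s. - ((1 - s) * (poly q s * poly q s))) = 0"
    unfolding inner01_def q by (simp add: algebra_simps)
  hence int0: "integral {0..1} (\<lambda>s. (1 - s) * (poly q s * poly q s)) = 0"
    by (simp add: integral_neg)
  have "(1 - x) * (poly q x * poly q x) = 0" if "0 < x" "x < 1" for x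
    using that by (intro integral_unit_eq_0_imp_zero[OF _ _ int0]) (auto intro!: continuous_intros)
  hence "q = 0" by (intro poly_eq_0_if_zero_on_unit) auto
  with \<open>q \<noteq> 0\<close> show False by simp
qed

lemma finite_polys_bounded_unit:
  fixes Q :: "real poly set"
  assumes "finite Q"
  shows "\<exists>D>0. \<forall>q\<in>Q. \<forall>x. 0 \<le> x \<longrightarrow> x \<le> 1 \<longrightarrow> \<bar>poly q x\<bar> \<le> D"
proof -
  define S where "S q = (\<Sum>i\<le>degree q. \<bar>coeff q i\<bar>)" for q :: "real poly"
  have S: "\<bar>poly q x\<bar> \<le> S q" if "0 \<le> x" "x \<le> 1" for q x
  proof -
    have "\<bar>poly q x\<bar> \<le> (\<Sum>i\<le>degree q. \<bar>coeff q i * x ^ i\<bar>)"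
      unfolding poly_altdef by (rule sum_abs)
    also have "\<dots> \<le> S q" unfolding S_def
      using that by (intro sum_mono) (simp add: abs_mult mult_left_le power_le_one)
    finally show ?thesis .
  qed
  have S_nonneg: "0 \<le> S q" for q unfolding S_def by (rule sum_nonneg) simp
  define D where "D = 1 + (\<Sum>q\<in>Q. S q)"
  have "0 < D" unfolding D_def using sum_nonneg[of Q S] S_nonneg by (simp add: add_pos_nonneg)
  moreover have "\<bar>poly q x\<bar> \<le> D" if "q \<in> Q" "0 \<le> x" "x \<le> 1" for q x
  proof -
    have "S q \<le> (\<Sum>q\<in>Q. S q)" using that(1) assms S_nonneg by (intro member_le_sum)
    thus ?thesis using S[OF that(2,3), of q] unfolding D_def by linarith
  qed
  ultimately show ?thesis by (intro exI[of _ D] conjI ballI allI impI)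
qed

lemma inner01_self_orth_expansion:
  assumes "degree p \<le> k"
  shows "inner01 p p = (\<Sum>m\<le>k. (fourier_coeff (poly p) m)\<^sup>2 * orth_sqnorm m)"
proof -
  have "inner01 p p = (\<Sum>m\<le>k. fourier_coeff (poly p) m * inner01 (orth_poly m) p)"
    by (subst (1) orth_expansion[OF assms]) (simp add: inner01_sum_left inner01_smult_left)
  also have "\<dots> = (\<Sum>m\<le>k. (fourier_coeff (poly p) m)\<^sup>2 * orth_sqnorm m)"
    using orth_sqnorm_pos
    by (intro sum.cong refl) (simp add: fourier_coeff_poly inner01_commute power2_eq_square)
  finally show ?thesis .
qed

lemma fourier_coeff_sq_le:
  assumes "degree p \<le> k" "m \<le> k"
  shows "(fourier_coeff (poly p) m)\<^sup>2 * orth_sqnorm m \<le> inner01 p p"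
  unfolding inner01_self_orth_expansion[OF assms(1)]
  using assms(2) orth_sqnorm_pos[THEN less_imp_le] by (intro member_le_sum) auto

text \<open>Equivalence of norms on \<open>P\<^sup>k\<close>, made explicit through the orthogonal expansion.\<close>

lemma higher_pderiv_sq_le_inner01:
  "\<exists>C>0. \<forall>p l x. degree p \<le> k \<longrightarrow> l \<le> k \<longrightarrow> 0 \<le> x \<longrightarrow> x \<le> 1 \<longrightarrow>
           (poly ((pderiv ^^ l) p) x)\<^sup>2 \<le> C * inner01 p p"
proof -
  obtain D where D: "D > 0" "\<And>m l x. m \<le> k \<Longrightarrow> l \<le> k \<Longrightarrow> 0 \<le> x \<Longrightarrow> x \<le> 1 \<Longrightarrow>
      \<bar>poly ((pderiv ^^ l) (orth_poly m)) x\<bar> \<le> D"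
    using finite_polys_bounded_unit[of "(\<lambda>(m, l). (pderiv ^^ l) (orth_poly m)) ` ({..k} \<times> {..k})"]
    by fastforce
  define g where "g = Min (orth_sqnorm ` {..k})"
  have g: "0 < g" "\<And>m. m \<le> k \<Longrightarrow> g \<le> orth_sqnorm m"
    unfolding g_def using orth_sqnorm_pos by (auto simp: Min_gr_iff)
  show ?thesis
  proof (intro exI[of _ "(real (k + 1) * D)\<^sup>2 / g"] conjI allI impI)
    show "0 < (real (k + 1) * D)\<^sup>2 / g" using D g by simp
    fix p :: "real poly" and l and x :: real
    assume p: "degree p \<le> k" and l: "l \<le> k" and x: "0 \<le> x" "x \<le> 1"
    define \<beta> where "\<beta> = fourier_coeff (poly p)"
    have \<beta>_sq: "(\<beta> m)\<^sup>2 \<le> inner01 p p / g" if "m \<le> k" for m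
    proof -
      have "g * (\<beta> m)\<^sup>2 \<le> (\<beta> m)\<^sup>2 * orth_sqnorm m"
        using g(2)[OF that] by (simp add: mult.commute mult_right_mono)
      also have "\<dots> \<le> inner01 p p" unfolding \<beta>_def by (rule fourier_coeff_sq_le[OF p that])
      finally show ?thesis using g(1) by (simp add: field_simps)
    qed
    have "\<bar>poly ((pderiv ^^ l) p) x\<bar> = \<bar>\<Sum>m\<le>k. \<beta> m * poly ((pderiv ^^ l) (orth_poly m)) x\<bar>"
      unfolding \<beta>_def by (subst orth_expansion[OF p]) (simp add: higher_pderiv_sum higher_pderiv_smult poly_sum)
    also have "\<dots> \<le> (\<Sum>m\<le>k. \<bar>\<beta> m\<bar> * D)"
      using D(2)[OF _ l x] by (intro order.trans[OF sum_abs] sum_mono) (simp add: abs_mult mult_left_mono)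
    finally have "(poly ((pderiv ^^ l) p) x)\<^sup>2 \<le> (\<Sum>m\<le>k. \<bar>\<beta> m\<bar> * D)\<^sup>2"
      by (metis abs_ge_zero power2_abs power_mono)
    also have "\<dots> \<le> (\<Sum>m\<le>k. (\<bar>\<beta> m\<bar> * D)\<^sup>2) * real (k + 1)"
      using sum_squared_le_sum_of_squares[of "\<lambda>m. \<bar>\<beta> m\<bar> * D" "{..k}"] by simp
    also have "\<dots> \<le> (\<Sum>m\<le>k. inner01 p p / g * D\<^sup>2) * real (k + 1)"
      using mult_right_mono[OF \<beta>_sq, of _ "D\<^sup>2"]
      by (intro mult_right_mono sum_mono) (simp_all add: power_mult_distrib)
    also have "\<dots> = (real (k + 1) * D)\<^sup>2 / g * inner01 p p"
      by (simp add: power2_eq_square field_simps)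
    finally show "(poly ((pderiv ^^ l) p) x)\<^sup>2 \<le> (real (k + 1) * D)\<^sup>2 / g * inner01 p p" .
  qed
qed

section \<open>The Gauss--Radau projection\<close>

text \<open>The projection \<open>P\<^sup>-\<close> of upwind DG error analysis, on \<open>[0, 1]\<close>: the Fourier coefficients
  below degree \<open>k\<close> are kept, and the top coefficient is chosen so that the value at the upwind
  end point \<open>1\<close> is reproduced.\<close>

definition radau_top :: "nat \<Rightarrow> (real \<Rightarrow> real) \<Rightarrow> real" where
  "radau_top k g = (g 1 - (\<Sum>m<k. fourier_coeff g m * poly (orth_poly m) 1)) / poly (orth_poly k) 1"

definition radau01 :: "nat \<Rightarrow> (real \<Rightarrow> real) \<Rightarrow> real poly" where
  "radau01 k g = (\<Sum>m<k. smult (fourier_coeff g m) (orth_poly m)) + smult (radau_top k g) (orth_poly k)"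

lemma degree_radau01: "degree (radau01 k g) \<le> k"
  unfolding radau01_def
  by (intro degree_add_le degree_sum_le) (auto intro: order.trans[OF degree_smult_le])

lemma poly_radau01_1: "poly (radau01 k g) 1 = g 1"
  unfolding radau01_def radau_top_def using poly_orth_poly_1_nonzero[of k] by (simp add: poly_sum)

lemma radau01_orth_orth_poly:
  assumes g: "continuous_on {0..1} g" and m: "m < k"
  shows "integral {0..1} (\<lambda>s. (g s - poly (radau01 k g) s) * poly (orth_poly m) s) = 0"
proof -
  have "inner01 (radau01 k g) (orth_poly m)
      = (\<Sum>j<k. fourier_coeff g j * inner01 (orth_poly j) (orth_poly m))"
    unfolding radau01_def using m
    by (simp add: inner01_add_left inner01_sum_left inner01_smult_left inner01_orth_poly)
  also have "\<dots> = fourier_coeff g m * orth_sqnorm m"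
    by (subst sum.remove[of _ m]) (use m in \<open>auto simp: orth_sqnorm_def inner01_orth_poly\<close>)
  finally have "inner01 (radau01 k g) (orth_poly m) = integral {0..1} (\<lambda>s. g s * poly (orth_poly m) s)"
    using orth_sqnorm_pos[of m] by (simp add: fourier_coeff_def)
  thus ?thesis unfolding inner01_def
    by (simp add: left_diff_distrib integral_diff integrable_unit_mult_poly[OF g]
                  integrable_unit_poly_mult_poly)
qed

lemma radau01_orth:
  assumes g: "continuous_on {0..1} g" and q: "degree q < k"
  shows "integral {0..1} (\<lambda>s. (g s - poly (radau01 k g) s) * poly q s) = 0"
proof -
  let ?e = "\<lambda>s. g s - poly (radau01 k g) s"
  have e: "continuous_on {0..1} ?e" using g by (intro continuous_intros) auto
  have q_exp: "q = (\<Sum>m\<le>k - 1. smult (fourier_coeff (poly q) m) (orth_poly m))"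
    using q by (intro orth_expansion) simp
  have "integral {0..1} (\<lambda>s. ?e s * poly q s)
      = integral {0..1} (\<lambda>s. \<Sum>m\<le>k - 1. fourier_coeff (poly q) m * (?e s * poly (orth_poly m) s))"
    by (subst q_exp) (simp add: poly_sum sum_distrib_left mult.left_commute)
  also have "\<dots> = (\<Sum>m\<le>k - 1. integral {0..1} (\<lambda>s. fourier_coeff (poly q) m * (?e s * poly (orth_poly m) s)))"
    by (rule integral_sum) (auto intro!: integrable_continuous_interval continuous_intros e)
  also have "\<dots> = 0"
    using q radau01_orth_orth_poly[OF g] by (intro sum.neutral) auto
  finally show ?thesis .
qed

lemma radau01_poly:
  assumes "degree p \<le> k" shows "radau01 k (poly p) = p"
proof -
  define \<beta> where "\<beta> = fourier_coeff (poly p)"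
  have p: "p = (\<Sum>m<k. smult (\<beta> m) (orth_poly m)) + smult (\<beta> k) (orth_poly k)"
    using orth_expansion[OF assms] by (simp add: \<beta>_def lessThan_Suc_atMost[symmetric])
  hence "poly p 1 = (\<Sum>m<k. \<beta> m * poly (orth_poly m) 1) + \<beta> k * poly (orth_poly k) 1"
    by (metis (no_types, lifting) poly_add poly_smult poly_sum sum.cong)
  hence "radau_top k (poly p) = \<beta> k"
    unfolding radau_top_def \<beta>_def using poly_orth_poly_1_nonzero[of k] by simp
  with p show ?thesis unfolding radau01_def \<beta>_def by simp
qed

lemma radau01_diff:
  assumes "continuous_on {0..1} g1" "continuous_on {0..1} g2"
  shows "radau01 k (\<lambda>s. g1 s - g2 s) = radau01 k g1 - radau01 k g2"
proof -
  have fc: "fourier_coeff (\<lambda>s. g1 s - g2 s) m = fourier_coeff g1 m - fourier_coeff g2 m" for m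
    unfolding fourier_coeff_def
    by (simp add: left_diff_distrib diff_divide_distrib
                  integral_diff[OF integrable_unit_mult_poly[OF assms(1)] integrable_unit_mult_poly[OF assms(2)]])
  have top: "radau_top k (\<lambda>s. g1 s - g2 s) = radau_top k g1 - radau_top k g2"
    unfolding radau_top_def fc by (simp add: sum_subtractf left_diff_distrib diff_divide_distrib)
  show ?thesis unfolding radau01_def fc top
    by (simp add: sum_subtractf smult_diff_left algebra_simps)
qed

lemma abs_fourier_coeff_le:
  assumes g: "continuous_on {0..1} g" and gM: "\<And>s. 0 \<le> s \<Longrightarrow> s \<le> 1 \<Longrightarrow> \<bar>g s\<bar> \<le> M"
    and A: "\<And>s. 0 \<le> s \<Longrightarrow> s \<le> 1 \<Longrightarrow> \<bar>poly (orth_poly m) s\<bar> \<le> A"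
  shows "\<bar>fourier_coeff g m\<bar> \<le> M * A / orth_sqnorm m"
proof -
  have "0 \<le> M" using gM[of 0] by simp
  hence "norm (integral {0..1} (\<lambda>s. g s * poly (orth_poly m) s)) \<le> integral {0..(1::real)} (\<lambda>s. M * A)"
    using gM A by (intro integral_norm_bound_integral integrable_unit_mult_poly[OF g])
      (auto simp: abs_mult intro: mult_mono)
  thus ?thesis unfolding fourier_coeff_def using orth_sqnorm_pos[of m]
    by (simp add: abs_div divide_right_mono)
qed

lemma radau01_bounded:
  "\<exists>C>0. \<forall>g M x. continuous_on {0..1} g \<longrightarrow> (\<forall>s. 0 \<le> s \<and> s \<le> 1 \<longrightarrow> \<bar>g s\<bar> \<le> M)
      \<longrightarrow> 0 \<le> x \<longrightarrow> x \<le> 1 \<longrightarrow> \<bar>poly (radau01 k g) x\<bar> \<le> C * M"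
proof -
  obtain A where A: "A > 0" "\<And>m x. m \<le> k \<Longrightarrow> 0 \<le> x \<Longrightarrow> x \<le> 1 \<Longrightarrow> \<bar>poly (orth_poly m) x\<bar> \<le> A"
    using finite_polys_bounded_unit[of "orth_poly ` {..k}"] by fastforce
  define S where "S = (\<Sum>m<k. A * A / orth_sqnorm m)"
  have S: "0 \<le> S" unfolding S_def
    using A(1) orth_sqnorm_pos[THEN less_imp_le] by (intro sum_nonneg divide_nonneg_nonneg) auto
  define C where "C = S + (1 + S) * A / \<bar>poly (orth_poly k) 1\<bar>"
  show ?thesis
  proof (intro exI[of _ C] conjI allI impI)
    show "0 < C" unfolding C_def
      using A(1) S poly_orth_poly_1_nonzero[of k] by (intro add_nonneg_pos) simp_all
    fix g :: "real \<Rightarrow> real" and M x :: real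
    assume g: "continuous_on {0..1} g" and gM: "\<forall>s. 0 \<le> s \<and> s \<le> 1 \<longrightarrow> \<bar>g s\<bar> \<le> M"
      and x: "0 \<le> x" "x \<le> 1"
    have M: "0 \<le> M" using gM[rule_format, of 0] by simp
    have fc: "\<bar>fourier_coeff g m\<bar> \<le> M * A / orth_sqnorm m" if "m \<le> k" for m
      using gM A(2)[OF that] by (intro abs_fourier_coeff_le[OF g]) auto
    have low: "\<bar>\<Sum>m<k. fourier_coeff g m * poly (orth_poly m) y\<bar> \<le> M * S" if "0 \<le> y" "y \<le> 1" for y
    proof -
      have summand: "\<bar>fourier_coeff g m * poly (orth_poly m) y\<bar> \<le> (M * A / orth_sqnorm m) * A" if "m < k" for m
      proof -
        have "0 \<le> M * A / orth_sqnorm m" using M A(1) orth_sqnorm_pos[of m] by simp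
        thus ?thesis unfolding abs_mult using fc[of m] A(2)[of m y] that \<open>0 \<le> y\<close> \<open>y \<le> 1\<close>
          by (intro mult_mono) auto
      qed
      have "\<bar>\<Sum>m<k. fourier_coeff g m * poly (orth_poly m) y\<bar> \<le> (\<Sum>m<k. (M * A / orth_sqnorm m) * A)"
        using summand by (intro order.trans[OF sum_abs] sum_mono) auto
      thus ?thesis unfolding S_def by (simp add: sum_distrib_left mult.assoc)
    qed
    have top: "\<bar>radau_top k g\<bar> \<le> M * (1 + S) / \<bar>poly (orth_poly k) 1\<bar>"
      using gM[rule_format, of 1] low[of 1] unfolding radau_top_def
      by (simp add: abs_div divide_right_mono algebra_simps)
    have "\<bar>poly (radau01 k g) x\<bar> \<le> M * S + \<bar>radau_top k g\<bar> * \<bar>poly (orth_poly k) x\<bar>"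
      using low[OF x] unfolding radau01_def by (simp add: poly_sum abs_mult order.trans[OF abs_triangle_ineq])
    also have "\<dots> \<le> M * S + (M * (1 + S) / \<bar>poly (orth_poly k) 1\<bar>) * A"
      using top A(2)[OF _ x] M S by (intro add_left_mono mult_mono) auto
    also have "\<dots> = C * M" unfolding C_def by (simp add: algebra_simps)
    finally show "\<bar>poly (radau01 k g) x\<bar> \<le> C * M" .
  qed
qed

lemma poly_pcompose_affine [simp]: "poly (p \<circ>\<^sub>p [:a, b:]) x = poly p (a + b * x)"
  by (simp add: poly_pcompose mult.commute)

lemma degree_pcompose_affine:
  fixes p :: "'a::idom poly"
  shows "b \<noteq> 0 \<Longrightarrow> degree (p \<circ>\<^sub>p [:a, b:]) = degree p"
  by (simp add: degree_pcompose degree_pCons_eq)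

lemma higher_pderiv_pcompose_affine:
  "(pderiv ^^ l) (p \<circ>\<^sub>p [:a, b:]) = smult (b ^ l) (((pderiv ^^ l) p) \<circ>\<^sub>p [:a, b:])"
proof (induction l)
  case (Suc l)
  thus ?case by (simp add: pderiv_smult pderiv_pcompose pderiv_pCons mult.commute)
qed simp

lemma higher_pderiv_diff: "(pderiv ^^ l) (p - q) = (pderiv ^^ l) p - (pderiv ^^ l) (q :: real poly)"
  by (induction l) (auto simp: pderiv_diff)

lemma continuous_on_rescale_unit:
  fixes g :: "real \<Rightarrow> real"
  assumes h: "0 < h" and g: "continuous_on {al..al + h} g"
  shows "continuous_on {0..1} (\<lambda>s. g (al + h * s))"
proof (rule continuous_on_compose2[OF g])
  show "continuous_on {0..(1::real)} (\<lambda>s. al + h * s)" by (intro continuous_intros)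
  show "(\<lambda>s. al + h * s) ` {0..1} \<subseteq> {al..al + h}" using h by (auto simp: mult_le_cancel_left1)
qed

lemma integral_sq_rescale_unit:
  assumes h: "0 < h"
  shows "integral {al..al + h} (\<lambda>x. (poly p x)\<^sup>2) = h * inner01 (p \<circ>\<^sub>p [:al, h:]) (p \<circ>\<^sub>p [:al, h:])"
  unfolding inner01_def
  by (subst integral_rescale_unit[OF h]) (auto intro!: continuous_intros simp: power2_eq_square)

definition inverse_ineq_const :: "nat \<Rightarrow> real \<Rightarrow> bool" where
  "inverse_ineq_const k C \<longleftrightarrow> 0 < C \<and>
     (\<forall>al h (p::real poly) l x. 0 < h \<longrightarrow> degree p \<le> k \<longrightarrow> l \<le> k \<longrightarrow> al \<le> x \<longrightarrow> x \<le> al + h \<longrightarrow>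
        (poly ((pderiv ^^ l) p) x)\<^sup>2 * h ^ (2 * l + 1) \<le> C * integral {al..al + h} (\<lambda>x. (poly p x)\<^sup>2))"

text \<open>The constant does not depend on the cell: rescale to \<open>[0, 1]\<close>, where each derivative
  brings out a factor \<open>h\<close>.\<close>

lemma inverse_inequality: "\<exists>C. inverse_ineq_const k C"
proof -
  obtain C where C: "C > 0" and unit: "\<And>p l x. degree p \<le> k \<Longrightarrow> l \<le> k \<Longrightarrow> 0 \<le> x \<Longrightarrow> x \<le> 1 \<Longrightarrow>
      (poly ((pderiv ^^ l) p) x)\<^sup>2 \<le> C * inner01 p p"
    using higher_pderiv_sq_le_inner01[of k] by blast
  show ?thesis unfolding inverse_ineq_const_def
  proof (intro exI[of _ C] conjI allI impI)
    fix al h :: real and p :: "real poly" and l :: nat and x :: real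
    assume h: "0 < h" and p: "degree p \<le> k" and l: "l \<le> k" and x: "al \<le> x" "x \<le> al + h"
    define s where "s = (x - al) / h"
    have s: "0 \<le> s" "s \<le> 1" "al + h * s = x" using h x unfolding s_def by (auto simp: field_simps)
    let ?q = "p \<circ>\<^sub>p [:al, h:]"
    have "poly ((pderiv ^^ l) ?q) s = h ^ l * poly ((pderiv ^^ l) p) x"
      by (simp add: higher_pderiv_pcompose_affine s(3))
    moreover have "(poly ((pderiv ^^ l) ?q) s)\<^sup>2 \<le> C * inner01 ?q ?q"
      using h p by (intro unit l s) (simp add: degree_pcompose_affine)
    ultimately have "(h ^ l * poly ((pderiv ^^ l) p) x)\<^sup>2 * h \<le> C * inner01 ?q ?q * h"
      using h by (intro mult_right_mono) auto
    also have "\<dots> = C * integral {al..al + h} (\<lambda>x. (poly p x)\<^sup>2)"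
      by (simp add: integral_sq_rescale_unit[OF h])
    finally show "(poly ((pderiv ^^ l) p) x)\<^sup>2 * h ^ (2 * l + 1) \<le> C * integral {al..al + h} (\<lambda>x. (poly p x)\<^sup>2)"
      by (simp add: power_mult_distrib power_add power_mult algebra_simps power2_eq_square)
  qed (fact C)
qed

definition radau_proj :: "nat \<Rightarrow> real \<Rightarrow> real \<Rightarrow> (real \<Rightarrow> real) \<Rightarrow> real poly" where
  "radau_proj k al h g = radau01 k (\<lambda>s. g (al + h * s)) \<circ>\<^sub>p [:- al / h, 1 / h:]"

lemma poly_radau_proj:
  "poly (radau_proj k al h g) x = poly (radau01 k (\<lambda>s. g (al + h * s))) ((x - al) / h)"
  unfolding radau_proj_def by (simp add: diff_divide_distrib)

lemma degree_radau_proj: "0 < h \<Longrightarrow> degree (radau_proj k al h g) \<le> k"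
  unfolding radau_proj_def by (simp add: degree_pcompose_affine degree_radau01)

lemma poly_radau_proj_right: "0 < h \<Longrightarrow> poly (radau_proj k al h g) (al + h) = g (al + h)"
  by (simp add: poly_radau_proj poly_radau01_1)

lemma radau_proj_orth:
  assumes h: "0 < h" and g: "continuous_on {al..al + h} g" and q: "degree q < k"
  shows "integral {al..al + h} (\<lambda>x. (g x - poly (radau_proj k al h g) x) * poly q x) = 0"
proof -
  have "integral {al..al + h} (\<lambda>x. (g x - poly (radau_proj k al h g) x) * poly q x)
      = h * integral {0..1} (\<lambda>s. (g (al + h * s) - poly (radau01 k (\<lambda>s. g (al + h * s))) s)
                                  * poly (q \<circ>\<^sub>p [:al, h:]) s)"
    using h g by (subst integral_rescale_unit[OF h]) (auto intro!: continuous_intros simp: poly_radau_proj)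
  also have "\<dots> = 0"
    using radau01_orth[OF continuous_on_rescale_unit[OF h g], of "q \<circ>\<^sub>p [:al, h:]"] q h
    by (simp add: degree_pcompose_affine)
  finally show ?thesis .
qed

lemma radau_proj_poly:
  assumes h: "0 < h" and p: "degree p \<le> k"
  shows "poly (radau_proj k al h (poly p)) x = poly p x"
proof -
  have "(\<lambda>s. poly p (al + h * s)) = poly (p \<circ>\<^sub>p [:al, h:])" by (simp add: fun_eq_iff)
  moreover have "radau01 k (poly (p \<circ>\<^sub>p [:al, h:])) = p \<circ>\<^sub>p [:al, h:]"
    using h p by (intro radau01_poly) (simp add: degree_pcompose_affine)
  ultimately show ?thesis using h by (simp add: poly_radau_proj)
qed

lemma radau_proj_diff:
  assumes h: "0 < h" and g: "continuous_on {al..al + h} g1" "continuous_on {al..al + h} g2"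
  shows "poly (radau_proj k al h (\<lambda>x. g1 x - g2 x)) x
       = poly (radau_proj k al h g1) x - poly (radau_proj k al h g2) x"
  unfolding poly_radau_proj
  using radau01_diff[OF continuous_on_rescale_unit[OF h g(1)] continuous_on_rescale_unit[OF h g(2)], of k]
  by simp

lemma radau_proj_bounded:
  "\<exists>C>0. \<forall>al h g M x. 0 < h \<longrightarrow> continuous_on {al..al + h} g \<longrightarrow>
     (\<forall>y. al \<le> y \<and> y \<le> al + h \<longrightarrow> \<bar>g y\<bar> \<le> M) \<longrightarrow> al \<le> x \<longrightarrow> x \<le> al + h \<longrightarrow>
     \<bar>poly (radau_proj k al h g) x\<bar> \<le> C * M"
proof -
  obtain C where C: "C > 0" and unit: "\<And>g M x. continuous_on {0..1} g \<Longrightarrow>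
      (\<forall>s. 0 \<le> s \<and> s \<le> 1 \<longrightarrow> \<bar>g s\<bar> \<le> M) \<Longrightarrow> 0 \<le> x \<Longrightarrow> x \<le> 1 \<Longrightarrow> \<bar>poly (radau01 k g) x\<bar> \<le> C * M"
    using radau01_bounded[of k] by blast
  show ?thesis
  proof (intro exI[of _ C] conjI allI impI)
    fix al h :: real and g :: "real \<Rightarrow> real" and M x :: real
    assume h: "0 < h" and g: "continuous_on {al..al + h} g"
      and gM: "\<forall>y. al \<le> y \<and> y \<le> al + h \<longrightarrow> \<bar>g y\<bar> \<le> M" and x: "al \<le> x" "x \<le> al + h"
    have "\<forall>s. 0 \<le> s \<and> s \<le> 1 \<longrightarrow> \<bar>g (al + h * s)\<bar> \<le> M"
      using gM h by (auto simp: mult_le_cancel_left1)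
    moreover have "0 \<le> (x - al) / h" "(x - al) / h \<le> 1" using x h by (auto simp: field_simps)
    ultimately show "\<bar>poly (radau_proj k al h g) x\<bar> \<le> C * M"
      unfolding poly_radau_proj by (intro unit continuous_on_rescale_unit[OF h g])
  qed (fact C)
qed

section \<open>Taylor polynomials and the approximation property\<close>

text \<open>Here \<open>f m\<close> plays the role of the \<open>m\<close>-th derivative of \<open>f 0\<close>.\<close>

definition taylor_poly :: "(nat \<Rightarrow> real \<Rightarrow> real) \<Rightarrow> real \<Rightarrow> nat \<Rightarrow> real poly" where
  "taylor_poly f c n = (\<Sum>m\<le>n. monom (f m c / fact m) m) \<circ>\<^sub>p [:- c, 1:]"

lemma poly_taylor_poly: "poly (taylor_poly f c n) x = (\<Sum>m<Suc n. f m c / fact m * (x - c) ^ m)"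
  unfolding taylor_poly_def by (simp add: poly_pcompose poly_sum poly_monom lessThan_Suc_atMost)

lemma degree_taylor_poly: "degree (taylor_poly f c n) \<le> n"
proof -
  have "degree (\<Sum>m\<le>n. monom (f m c / fact m) m) \<le> n"
    by (rule degree_sum_le) (auto intro: order.trans[OF degree_monom_le])
  thus ?thesis unfolding taylor_poly_def by (simp add: degree_pcompose)
qed

lemma higher_pderiv_taylor_poly:
  assumes "l \<le> n" shows "poly ((pderiv ^^ l) (taylor_poly f c n)) c = f l c"
proof -
  have shift: "(pderiv ^^ l) (p \<circ>\<^sub>p [:- c, 1:]) = ((pderiv ^^ l) p) \<circ>\<^sub>p [:- c, 1::real:]" for p
    by (induction l) (simp_all add: pderiv_pcompose pderiv_pCons)
  have "poly ((pderiv ^^ l) (taylor_poly f c n)) c = coeff ((pderiv ^^ l) (\<Sum>m\<le>n. monom (f m c / fact m) m)) 0"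
    unfolding taylor_poly_def shift by (simp add: poly_pcompose poly_0_coeff_0)
  also have "\<dots> = pochhammer 1 l * (f l c / fact l)"
    using assms by (simp add: coeff_higher_pderiv coeff_sum coeff_monom)
  finally show ?thesis by (simp add: pochhammer_fact[symmetric])
qed

lemma taylor_poly_error:
  fixes f :: "nat \<Rightarrow> real \<Rightarrow> real"
  assumes f: "\<And>m y. (f m has_real_derivative f (Suc m) y) (at y)"
    and B: "\<And>y. lo \<le> y \<Longrightarrow> y \<le> hi \<Longrightarrow> \<bar>f (Suc n) y\<bar> \<le> B"
    and c: "lo \<le> c" "c \<le> hi" and x: "lo \<le> x" "x \<le> hi"
  shows "\<bar>f 0 x - poly (taylor_poly f c n) x\<bar> \<le> B * \<bar>x - c\<bar> ^ Suc n / fact (Suc n)"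
proof (cases "x = c")
  case True
  have "poly (taylor_poly f c n) c = f 0 c"
    unfolding poly_taylor_poly by (simp add: sum.lessThan_Suc_shift del: sum.lessThan_Suc)
  moreover have "0 \<le> B" using B[of c] c by linarith
  ultimately show ?thesis using True by simp
next
  case False
  obtain t where t: "if x < c then x < t \<and> t < c else c < t \<and> t < x"
    and e: "f 0 x = (\<Sum>m<Suc n. f m c / fact m * (x - c) ^ m) + f (Suc n) t / fact (Suc n) * (x - c) ^ Suc n"
    using Taylor[of "Suc n" f "f 0" lo hi c x] f c x False by auto
  have "lo \<le> t" "t \<le> hi" using t c x by (auto split: if_splits)
  hence "\<bar>f (Suc n) t\<bar> / fact (Suc n) * \<bar>x - c\<bar> ^ Suc n \<le> B / fact (Suc n) * \<bar>x - c\<bar> ^ Suc n"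
    using B by (intro mult_right_mono divide_right_mono) auto
  thus ?thesis unfolding poly_taylor_poly e by (simp add: abs_mult power_abs)
qed

definition radau_approx_const :: "nat \<Rightarrow> real \<Rightarrow> bool" where
  "radau_approx_const k C \<longleftrightarrow> 0 < C \<and>
     (\<forall>al h f B x. 0 < h \<longrightarrow> (\<forall>m y. (f m has_real_derivative f (Suc m) y) (at y)) \<longrightarrow>
        (\<forall>y. al \<le> y \<and> y \<le> al + h \<longrightarrow> \<bar>f (Suc k) y\<bar> \<le> B) \<longrightarrow> al \<le> x \<longrightarrow> x \<le> al + h \<longrightarrow>
        \<bar>f 0 x - poly (radau_proj k al h (f 0)) x\<bar> \<le> C * B * h ^ Suc k)"

text \<open>Since the projection reproduces \<open>P\<^sup>k\<close>, its error is that of a Taylor polynomial plus the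
  projection of that error, which is bounded by stability.\<close>

lemma radau_proj_approx: "\<exists>C. radau_approx_const k C"
proof -
  obtain C where C: "C > 0" and stab: "\<And>al h g M x. 0 < h \<Longrightarrow> continuous_on {al..al + h} g \<Longrightarrow>
      (\<forall>y. al \<le> y \<and> y \<le> al + h \<longrightarrow> \<bar>g y\<bar> \<le> M) \<Longrightarrow> al \<le> x \<Longrightarrow> x \<le> al + h \<Longrightarrow>
      \<bar>poly (radau_proj k al h g) x\<bar> \<le> C * M"
    using radau_proj_bounded[of k] by blast
  show ?thesis unfolding radau_approx_const_def
  proof (intro exI[of _ "(1 + C) / fact (Suc k)"] conjI allI impI)
    show "0 < (1 + C) / fact (Suc k)" using C by simp
    fix al h :: real and f :: "nat \<Rightarrow> real \<Rightarrow> real" and B x :: real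
    assume h: "0 < h" and f: "\<forall>m y. (f m has_real_derivative f (Suc m) y) (at y)"
      and B: "\<forall>y. al \<le> y \<and> y \<le> al + h \<longrightarrow> \<bar>f (Suc k) y\<bar> \<le> B" and x: "al \<le> x" "x \<le> al + h"
    define T where "T = taylor_poly f (al + h) k"
    define \<epsilon> where "\<epsilon> = B * h ^ Suc k / fact (Suc k)"
    have "0 \<le> B" using B h by force
    have err: "\<bar>f 0 y - poly T y\<bar> \<le> \<epsilon>" if "al \<le> y" "y \<le> al + h" for y
    proof -
      have "\<bar>f 0 y - poly T y\<bar> \<le> B * \<bar>y - (al + h)\<bar> ^ Suc k / fact (Suc k)"
        unfolding T_def using f B that h by (intro taylor_poly_error) auto
      also have "\<dots> \<le> \<epsilon>" unfolding \<epsilon>_def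
        using that \<open>0 \<le> B\<close> by (intro divide_right_mono mult_left_mono power_mono) auto
      finally show ?thesis .
    qed
    have f0: "continuous_on {al..al + h} (f 0)"
      using f by (meson DERIV_isCont continuous_at_imp_continuous_on)
    have "f 0 x - poly (radau_proj k al h (f 0)) x
        = (f 0 x - poly T x) - poly (radau_proj k al h (\<lambda>y. f 0 y - poly T y)) x"
      using radau_proj_diff[OF h f0, of "poly T" k x] radau_proj_poly[OF h, of T k al x]
      by (simp add: T_def degree_taylor_poly continuous_intros)
    moreover have "\<bar>poly (radau_proj k al h (\<lambda>y. f 0 y - poly T y)) x\<bar> \<le> C * \<epsilon>"
      using err f0 by (intro stab h x) (auto intro!: continuous_intros)
    ultimately have "\<bar>f 0 x - poly (radau_proj k al h (f 0)) x\<bar> \<le> \<epsilon> + C * \<epsilon>"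
      using err[OF x] by linarith
    also have "\<dots> = (1 + C) / fact (Suc k) * B * h ^ Suc k"
      unfolding \<epsilon>_def by (simp add: add_divide_distrib algebra_simps)
    finally show "\<bar>f 0 x - poly (radau_proj k al h (f 0)) x\<bar> \<le> (1 + C) / fact (Suc k) * B * h ^ Suc k" .
  qed
qed

section \<open>Smooth functions of space and time\<close>

lemma smooth2_differentiable:
  "smooth2 f \<Longrightarrow> (\<lambda>q::real \<times> real. pderivs ds f (fst q) (snd q)) differentiable (at p)"
  unfolding smooth2_def by blast

lemma smooth2_continuous_on:
  assumes "smooth2 f"
  shows "continuous_on S (\<lambda>q::real \<times> real. pderivs ds f (fst q) (snd q))"
  using smooth2_differentiable[OF assms] differentiable_imp_continuous_within
  by (intro continuous_at_imp_continuous_on) blast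

lemma smooth2_continuous_on_x:
  assumes "smooth2 f" shows "continuous_on S (\<lambda>x. pderivs ds f x t)"
  using continuous_on_compose2[OF smooth2_continuous_on[OF assms, of UNIV ds], of S "\<lambda>x. (x, t)"]
  by (simp add: continuous_intros)

lemma smooth2_has_derivative_x:
  assumes "smooth2 f"
  shows "((\<lambda>y. pderivs ds f y t) has_real_derivative pderivs (True # ds) f x t) (at x)"
proof -
  have "(\<lambda>y::real. (y, t)) differentiable (at x)"
    by (rule differentiableI, rule derivative_eq_intros) (auto intro: derivative_eq_intros)
  hence "((\<lambda>q::real \<times> real. pderivs ds f (fst q) (snd q)) \<circ> (\<lambda>y. (y, t))) differentiable (at x)"
    by (rule differentiable_chain_at) (rule smooth2_differentiable[OF assms])
  hence "(\<lambda>y. pderivs ds f y t) differentiable (at x)" by (simp add: o_def)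
  thus ?thesis by (simp add: DERIV_deriv_iff_real_differentiable Dx_def)
qed

lemma smooth2_has_derivative_t:
  assumes "smooth2 f"
  shows "((\<lambda>s. pderivs ds f x s) has_real_derivative pderivs (False # ds) f x t) (at t)"
proof -
  have "(\<lambda>s::real. (x, s)) differentiable (at t)"
    by (rule differentiableI, rule derivative_eq_intros) (auto intro: derivative_eq_intros)
  hence "((\<lambda>q::real \<times> real. pderivs ds f (fst q) (snd q)) \<circ> (\<lambda>s. (x, s))) differentiable (at t)"
    by (rule differentiable_chain_at) (rule smooth2_differentiable[OF assms])
  hence "(\<lambda>s. pderivs ds f x s) differentiable (at t)" by (simp add: o_def)
  thus ?thesis by (simp add: DERIV_deriv_iff_real_differentiable Dt_def)
qed

definition Dxn :: "(real \<Rightarrow> real \<Rightarrow> real) \<Rightarrow> nat \<Rightarrow> real \<Rightarrow> real \<Rightarrow> real" where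
  "Dxn f m = pderivs (replicate m True) f"

lemma Dxn_0 [simp]: "Dxn f 0 = f"
  by (simp add: Dxn_def)

lemma Dxn_Suc: "Dxn f (Suc m) = Dx (Dxn f m)"
  by (simp add: Dxn_def)

lemma Dxn_has_derivative:
  "smooth2 f \<Longrightarrow> ((\<lambda>y. Dxn f m y t) has_real_derivative Dxn f (Suc m) x t) (at x)"
  unfolding Dxn_def using smooth2_has_derivative_x[of f "replicate m True" t x] by simp

lemma Dxn_periodic:
  assumes "\<forall>x t. f (x + L) t = f x t"
  shows "Dxn f m (x + L) t = Dxn f m x t"
proof (induction m arbitrary: x)
  case 0 thus ?case using assms by simp
next
  case (Suc m)
  have "deriv (\<lambda>y. Dxn f m y t) (x + L) = deriv (\<lambda>y. Dxn f m (y + L) t) x"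
    unfolding deriv_def by (simp add: DERIV_shift)
  thus ?case using Suc by (simp add: Dxn_Suc Dx_def)
qed

lemma Dxn_bounded:
  assumes "smooth2 f"
  shows "\<exists>B\<ge>0. \<forall>m x t. m \<le> K \<longrightarrow> a \<le> x \<longrightarrow> x \<le> b \<longrightarrow> 0 \<le> t \<longrightarrow> t \<le> T \<longrightarrow> \<bar>Dxn f m x t\<bar> \<le> B"
proof -
  have "\<exists>B. \<forall>q\<in>{a..b} \<times> {0..T}. \<bar>Dxn f m (fst q) (snd q)\<bar> \<le> B" for m
  proof -
    have "compact ((\<lambda>q. Dxn f m (fst q) (snd q)) ` ({a..b} \<times> {0..T}))"
      unfolding Dxn_def
      by (intro compact_continuous_image smooth2_continuous_on[OF assms] compact_Times compact_Icc)
    thus ?thesis by (auto dest!: compact_imp_bounded simp: bounded_iff)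
  qed
  then obtain Bm where Bm: "\<And>m x t. a \<le> x \<Longrightarrow> x \<le> b \<Longrightarrow> 0 \<le> t \<Longrightarrow> t \<le> T \<Longrightarrow> \<bar>Dxn f m x t\<bar> \<le> Bm m"
    by (metis atLeastAtMost_iff fst_conv mem_Times_iff snd_conv)
  show ?thesis
  proof (intro exI[of _ "\<Sum>m\<le>K. \<bar>Bm m\<bar>"] conjI allI impI)
    fix m x t assume "m \<le> K" "a \<le> x" "x \<le> b" "0 \<le> t" "t \<le> T"
    hence "\<bar>Dxn f m x t\<bar> \<le> \<bar>Bm m\<bar>" using Bm[of x t m] by linarith
    also have "\<bar>Bm m\<bar> \<le> (\<Sum>m\<le>K. \<bar>Bm m\<bar>)" using \<open>m \<le> K\<close> by (intro member_le_sum) auto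
    finally show "\<bar>Dxn f m x t\<bar> \<le> (\<Sum>m\<le>K. \<bar>Bm m\<bar>)" .
  qed (simp add: sum_nonneg)
qed

section \<open>Time derivatives of polynomial-valued functions\<close>

lemma fourier_coeff_rescale_has_derivative:
  assumes u: "smooth2 u"
  shows "((\<lambda>s. fourier_coeff (\<lambda>\<sigma>. u (al + h * \<sigma>) s) m) has_real_derivative
           fourier_coeff (\<lambda>\<sigma>. Dt u (al + h * \<sigma>) t) m) (at t)"
proof -
  have cont: "continuous_on UNIV (\<lambda>q::real \<times> real. pderivs ds u (fst q) (snd q))" for ds
    by (rule smooth2_continuous_on[OF u])
  have "((\<lambda>s. integral (cbox 0 1) (\<lambda>\<sigma>. u (al + h * \<sigma>) s * poly (orth_poly m) \<sigma>)) has_field_derivative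
        integral (cbox 0 1) (\<lambda>\<sigma>. Dt u (al + h * \<sigma>) t * poly (orth_poly m) \<sigma>)) (at t within UNIV)"
  proof (rule leibniz_rule_field_derivative[where fx = "\<lambda>s \<sigma>. Dt u (al + h * \<sigma>) s * poly (orth_poly m) \<sigma>"])
    fix s \<sigma> :: real
    show "((\<lambda>s. u (al + h * \<sigma>) s * poly (orth_poly m) \<sigma>) has_field_derivative
           Dt u (al + h * \<sigma>) s * poly (orth_poly m) \<sigma>) (at s within UNIV)"
      using smooth2_has_derivative_t[OF u, of "[]" "al + h * \<sigma>" s] by (auto intro!: derivative_eq_intros)
  next
    fix s :: real
    have "continuous_on (cbox 0 1) (\<lambda>\<sigma>::real. (al + h * \<sigma>, s))" by (intro continuous_intros)
    from continuous_on_compose2[OF cont[of "[]"] this]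
    show "(\<lambda>\<sigma>. u (al + h * \<sigma>) s * poly (orth_poly m) \<sigma>) integrable_on cbox 0 1"
      by (intro integrable_continuous continuous_intros) auto
  next
    have "continuous_on (UNIV \<times> cbox 0 1) (\<lambda>q::real \<times> real. (al + h * snd q, fst q))"
      by (intro continuous_intros)
    from continuous_on_compose2[OF cont[of "[False]"] this]
    show "continuous_on (UNIV \<times> cbox 0 1) (\<lambda>(s, \<sigma>). Dt u (al + h * \<sigma>) s * poly (orth_poly m) \<sigma>)"
      by (auto simp: case_prod_beta' intro!: continuous_intros)
  qed auto
  thus ?thesis unfolding fourier_coeff_def using orth_sqnorm_pos[of m] by (auto intro!: derivative_eq_intros)
qed

lemma coeff_radau_proj:
  "coeff (radau_proj k al h g) j =
     (\<Sum>m<k. fourier_coeff (\<lambda>\<sigma>. g (al + h * \<sigma>)) m * coeff (orth_poly m \<circ>\<^sub>p [:- al / h, 1 / h:]) j)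
     + radau_top k (\<lambda>\<sigma>. g (al + h * \<sigma>)) * coeff (orth_poly k \<circ>\<^sub>p [:- al / h, 1 / h:]) j"
  unfolding radau_proj_def radau01_def by (simp add: pcompose_add pcompose_smult pcompose_sum coeff_sum)

lemma coeff_radau_proj_has_derivative:
  assumes u: "smooth2 u"
  shows "((\<lambda>s. coeff (radau_proj k al h (\<lambda>x. u x s)) j) has_real_derivative
           coeff (radau_proj k al h (\<lambda>x. Dt u x t)) j) (at t)"
proof -
  note fc = fourier_coeff_rescale_has_derivative[OF u]
  have "((\<lambda>s. u (al + h * 1) s) has_real_derivative Dt u (al + h * 1) t) (at t)"
    using smooth2_has_derivative_t[OF u, of "[]" "al + h * 1" t] by simp
  hence "((\<lambda>s. radau_top k (\<lambda>\<sigma>. u (al + h * \<sigma>) s)) has_real_derivative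
           radau_top k (\<lambda>\<sigma>. Dt u (al + h * \<sigma>) t)) (at t)"
    unfolding radau_top_def by (intro DERIV_cdivide DERIV_diff DERIV_sum DERIV_cmult_right fc)
  thus ?thesis unfolding coeff_radau_proj
    by (intro DERIV_add DERIV_sum DERIV_cmult_right fc)
qed

lemma integral_poly_mult_poly_coeffs:
  fixes p q :: "real poly"
  assumes "degree p \<le> k" "degree q \<le> k"
  shows "integral {c..d} (\<lambda>x. poly p x * poly q x)
       = (\<Sum>i\<le>k. \<Sum>j\<le>k. coeff p i * coeff q j * integral {c..d} (\<lambda>x. x ^ (i + j)))"
proof -
  have poly_k: "poly r x = (\<Sum>i\<le>k. coeff r i * x ^ i)" if "degree r \<le> k" for r :: "real poly" and x
    unfolding poly_altdef using that by (intro sum.mono_neutral_left) (auto simp: coeff_eq_0)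
  have "integral {c..d} (\<lambda>x. poly p x * poly q x)
      = integral {c..d} (\<lambda>x. \<Sum>i\<le>k. \<Sum>j\<le>k. coeff p i * coeff q j * x ^ (i + j))"
    by (rule integral_cong)
       (simp add: poly_k[OF assms(1)] poly_k[OF assms(2)] sum_product power_add algebra_simps)
  also have "\<dots> = (\<Sum>i\<le>k. \<Sum>j\<le>k. integral {c..d} (\<lambda>x. coeff p i * coeff q j * x ^ (i + j)))"
    by (subst integral_sum, simp, intro ballI integrable_continuous_interval continuous_intros,
        intro sum.cong refl integral_sum) (auto intro!: integrable_continuous_interval continuous_intros)
  finally show ?thesis by simp
qed

text \<open>The integral is a quadratic form in the coefficients.\<close>

lemma integral_sq_poly_has_derivative:
  fixes p :: "real \<Rightarrow> real poly"
  assumes deg: "\<forall>s\<in>S. degree (p s) \<le> k" and deg': "degree dp \<le> k"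
    and p': "\<forall>j. ((\<lambda>s. coeff (p s) j) has_real_derivative coeff dp j) (at t within S)" and t: "t \<in> S"
  shows "((\<lambda>s. integral {c..d} (\<lambda>x. (poly (p s) x)\<^sup>2)) has_real_derivative
           2 * integral {c..d} (\<lambda>x. poly (p t) x * poly dp x)) (at t within S)"
proof -
  define I where "I n = integral {c..d} (\<lambda>x::real. x ^ n)" for n
  have F: "((\<lambda>s. \<Sum>i\<le>k. \<Sum>j\<le>k. coeff (p s) i * coeff (p s) j * I (i + j)) has_real_derivative
     (\<Sum>i\<le>k. \<Sum>j\<le>k. (coeff dp i * coeff (p t) j + coeff dp j * coeff (p t) i) * I (i + j))) (at t within S)"
    by (intro DERIV_sum DERIV_cmult_right DERIV_mult p'[rule_format])
  have "(\<Sum>i\<le>k. \<Sum>j\<le>k. (coeff dp i * coeff (p t) j + coeff dp j * coeff (p t) i) * I (i + j))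
      = (\<Sum>i\<le>k. \<Sum>j\<le>k. coeff dp i * coeff (p t) j * I (i + j))
        + (\<Sum>i\<le>k. \<Sum>j\<le>k. coeff (p t) i * coeff dp j * I (i + j))"
    by (simp only: sum.distrib distrib_right mult.commute[of "coeff dp _"] mult.assoc)
  also have "\<dots> = 2 * integral {c..d} (\<lambda>x. poly (p t) x * poly dp x)"
    using integral_poly_mult_poly_coeffs[OF deg' deg[rule_format, OF t], of c d]
      integral_poly_mult_poly_coeffs[OF deg[rule_format, OF t] deg', of c d]
    by (simp add: I_def mult.commute)
  finally have v: "(\<Sum>i\<le>k. \<Sum>j\<le>k. (coeff dp i * coeff (p t) j + coeff dp j * coeff (p t) i) * I (i + j))
      = 2 * integral {c..d} (\<lambda>x. poly (p t) x * poly dp x)" .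
  have "(\<Sum>i\<le>k. \<Sum>j\<le>k. coeff (p s) i * coeff (p s) j * I (i + j)) = integral {c..d} (\<lambda>x. (poly (p s) x)\<^sup>2)"
    if "s \<in> S" for s
    using integral_poly_mult_poly_coeffs[OF deg[rule_format, OF that] deg[rule_format, OF that], of c d]
    by (simp add: I_def power2_eq_square)
  thus ?thesis
    by (intro has_field_derivative_transform_within[OF F[unfolded v] zero_less_one t]) simp
qed

lemma degree_coeff_derivative_le:
  fixes p :: "real \<Rightarrow> real poly"
  assumes T: "0 < T" and t: "t \<in> {0..T}" and deg: "\<forall>s\<in>{0..T}. degree (p s) \<le> k"
    and p': "\<forall>j. ((\<lambda>s. coeff (p s) j) has_real_derivative coeff dp j) (at t within {0..T})"
  shows "degree dp \<le> k"
proof (rule degree_le, intro allI impI)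
  fix j assume j: "k < j"
  have "((\<lambda>s. coeff (p s) j) has_real_derivative 0) (at t within {0..T})"
  proof (rule has_field_derivative_transform_within[OF _ zero_less_one t])
    fix s assume "s \<in> {0..T}"
    hence "degree (p s) < j" using deg j by force
    thus "0 = coeff (p s) j" by (simp add: coeff_eq_0)
  qed simp
  thus "coeff dp j = 0"
    using vector_derivative_unique_within_closed_interval[OF T, of t] p'[rule_format, of j] t
    by (simp add: has_real_derivative_iff_has_vector_derivative)
qed

lemma gronwall_exp_bound:
  fixes \<Psi> \<Psi>' :: "real \<Rightarrow> real"
  assumes A: "0 \<le> A"
    and \<Psi>': "\<And>s. s \<in> {0..T} \<Longrightarrow> (\<Psi> has_real_derivative \<Psi>' s) (at s within {0..T})"
    and le: "\<And>s. s \<in> {0..T} \<Longrightarrow> \<Psi>' s \<le> A * \<Psi> s" and t: "t \<in> {0..T}"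
  shows "\<Psi> t \<le> \<Psi> 0 * exp (A * t)"
proof -
  define g where "g s = exp (- A * s) * \<Psi> s" for s
  have g': "(g has_real_derivative exp (- A * s) * (\<Psi>' s - A * \<Psi> s)) (at s within {0..T})"
    if "s \<in> {0..T}" for s
    using \<Psi>'[OF that] unfolding g_def by (auto intro!: derivative_eq_intros simp: algebra_simps)
  have "continuous_on {0..T} g"
    using g' by (meson DERIV_continuous continuous_on_eq_continuous_within)
  hence "g t \<le> g 0"
  proof (cases "t = 0")
    case False
    show ?thesis
    proof (rule DERIV_nonpos_imp_decreasing_open[of 0 t g])
      show "continuous_on {0..t} g" using \<open>continuous_on {0..T} g\<close> t by (auto elim: continuous_on_subset)
      fix x assume x: "0 < x" "x < t"
      hence "(g has_real_derivative exp (- A * x) * (\<Psi>' x - A * \<Psi> x)) (at x)"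
        using g'[of x] t at_within_Icc_at[of 0 x T] by simp
      moreover have "exp (- A * x) * (\<Psi>' x - A * \<Psi> x) \<le> 0"
        using le[of x] x t by (intro mult_nonneg_nonpos) auto
      ultimately show "\<exists>y. (g has_real_derivative y) (at x) \<and> y \<le> 0" by blast
    qed (use t False in auto)
  qed simp
  hence "exp (A * t) * (exp (- A * t) * \<Psi> t) \<le> exp (A * t) * \<Psi> 0"
    unfolding g_def by (intro mult_left_mono) auto
  thus ?thesis by (simp add: exp_minus field_simps)
qed

section \<open>The periodic mesh\<close>

lemma hh_pos: "a < b \<Longrightarrow> 1 \<le> N \<Longrightarrow> 0 < hh a b N"
  unfolding hh_def by simp

lemma hh_le: "a < b \<Longrightarrow> 1 \<le> N \<Longrightarrow> hh a b N \<le> b - a"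
  unfolding hh_def using divide_left_mono[of 1 "real N" "b - a"] by simp

lemma real_mult_hh: "1 \<le> N \<Longrightarrow> real N * hh a b N = b - a"
  unfolding hh_def by simp

lemma xR_eq: "xR a b N i = xL a b N i + hh a b N"
  unfolding xR_def xL_def by (simp add: algebra_simps)

lemma cell_subset_domain:
  assumes "a < b" "i < N" "xL a b N i \<le> x" "x \<le> xL a b N i + hh a b N"
  shows "a \<le> x" "x \<le> b"
proof -
  have h: "0 < hh a b N" using assms by (intro hh_pos) auto
  thus "a \<le> x" using assms unfolding xL_def by (smt (verit) of_nat_0_le_iff zero_le_mult_iff)
  have "xL a b N i + hh a b N = a + real (Suc i) * hh a b N" unfolding xL_def by (simp add: algebra_simps)
  also have "\<dots> \<le> a + real N * hh a b N" using assms h by (intro add_left_mono mult_right_mono) auto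
  also have "\<dots> = b" using real_mult_hh[of N a b] assms by simp
  finally show "x \<le> b" using assms by simp
qed

lemma prv_less: "1 \<le> N \<Longrightarrow> prv N i < N"
  unfolding prv_def by simp

lemma nxt_less: "1 \<le> N \<Longrightarrow> nxt N i < N"
  unfolding nxt_def by simp

lemma nxt_prv: "i < N \<Longrightarrow> nxt N (prv N i) = i"
  unfolding nxt_def prv_def by (simp add: mod_Suc_eq)

lemma prv_nxt: "i < N \<Longrightarrow> prv N (nxt N i) = i"
  unfolding nxt_def prv_def by (cases "Suc i < N") (auto simp: mod_Suc)

lemma sum_prv_reindex:
  assumes "1 \<le> N" shows "(\<Sum>i<N. f (prv N i)) = (\<Sum>i<N. f i)"
proof -
  have "bij_betw (prv N) {..<N} {..<N}"
    by (rule bij_betwI[where g = "nxt N"]) (use assms in \<open>auto simp: prv_less nxt_less nxt_prv prv_nxt\<close>)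
  thus ?thesis by (rule sum.reindex_bij_betw)
qed

lemma sum_nxt_reindex:
  assumes "1 \<le> N" shows "(\<Sum>i<N. f (nxt N i)) = (\<Sum>i<N. f i)"
  using sum_prv_reindex[OF assms, of "\<lambda>i. f (nxt N i)"] by (simp add: nxt_prv)

lemma periodic_xL_nxt:
  assumes j: "j < N" and per: "\<forall>x. F (x + (b - a)) = F x"
  shows "F (xL a b N (nxt N j)) = F (xL a b N j + hh a b N)"
proof (cases "Suc j < N")
  case True
  thus ?thesis unfolding nxt_def xL_def by (simp add: algebra_simps)
next
  case False
  hence "Suc j = N" using j by simp
  hence "nxt N j = 0" "xL a b N j + hh a b N = a + (b - a)"
    unfolding nxt_def xL_def hh_def by (auto simp: field_simps)
  thus ?thesis using per[rule_format, of a] unfolding xL_def by simp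
qed

lemma nu_bounds:
  assumes h: "0 < hh a b N" and x: "xL a b N i \<le> x" "x \<le> xL a b N i + hh a b N"
  shows "0 \<le> nu a b N i x" "nu a b N i x \<le> 1"
proof -
  have "xM a b N i = xL a b N i + hh a b N / 2" unfolding xM_def xL_def by (simp add: algebra_simps)
  hence "x - xM a b N i \<le> hh a b N / 2" "- (hh a b N / 2) \<le> x - xM a b N i" using x by linarith+
  hence "\<bar>x - xM a b N i\<bar> \<le> hh a b N / 2" by linarith
  hence "(x - xM a b N i)\<^sup>2 \<le> (hh a b N / 2)\<^sup>2"
    using h abs_le_square_iff[of "x - xM a b N i" "hh a b N / 2"] by simp
  hence "((x - xM a b N i) / (hh a b N / 2))\<^sup>2 \<le> 1"
    using h by (simp only: power_divide divide_le_eq_1_pos zero_less_power zero_less_divide_iff) simp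
  thus "0 \<le> nu a b N i x" "nu a b N i x \<le> 1" unfolding nu_def by auto
qed

lemma fhat_eq_upwind: "fhat a b N U j = poly (U j) (xR a b N j)"
  unfolding fhat_def tr_m_def by (simp add: field_simps)

lemma sigma_jump_nonneg:
  assumes "0 < c0" "1 \<le> N" "a < b"
  shows "0 \<le> sigma_jump c0 k a b N U i"
  unfolding sigma_jump_def jnorm_def using assms hh_pos[of a b N]
  by (auto intro!: mult_nonneg_nonneg add_nonneg_nonneg sum_nonneg)

lemma sigma_nonneg:
  assumes "0 < c0" "1 \<le> N" "a < b"
  shows "0 \<le> sigma c0 C k a b N U i"
  unfolding sigma_def using sigma_jump_nonneg[OF assms, of k U i] by (simp add: le_max_iff_disj)

text \<open>The entropy part of \<open>\<sigma>\<close> is capped by \<open>C \<sigma>\<^sup>j\<^sup>u\<^sup>m\<^sup>p\<close>, so only the jumps of the solution matter.\<close>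

lemma sigma_le_jumps:
  assumes c0: "0 < c0" and C: "1 < C" and N: "1 \<le> N" and ab: "a < b"
  shows "sigma c0 C k a b N U i
       \<le> C * c0 * (1 + real k * real (k + 1)) * (\<Sum>l\<le>k. hh a b N ^ (l + 1) * jnorm a b N U l i)"
proof -
  let ?h = "hh a b N" and ?W = "1 + real k * real (k + 1)"
  have h: "0 < ?h" by (rule hh_pos[OF ab N])
  have J: "0 \<le> ?h ^ (l + 1) * jnorm a b N U l i" for l using h by (simp add: jnorm_def)
  have W: "real l * real (l + 1) \<le> ?W" if "l \<le> k" for l
  proof -
    have "real l * real (l + 1) \<le> real k * real (k + 1)" using that by (intro mult_mono) auto
    thus ?thesis by linarith
  qed
  have "?h * jnorm a b N U 0 i \<le> ?W * (?h ^ (0 + 1) * jnorm a b N U 0 i)"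
    using mult_right_mono[of 1 ?W, OF _ J[of 0]] by simp
  moreover have "real l * real (l + 1) * ?h ^ (l + 1) * jnorm a b N U l i
      \<le> ?W * (?h ^ (l + 1) * jnorm a b N U l i)" if "l \<le> k" for l
    using mult_right_mono[OF W[OF that] J[of l]] by (simp add: mult.assoc)
  ultimately have "?h * jnorm a b N U 0 i + (\<Sum>l=1..k. real l * real (l + 1) * ?h ^ (l + 1) * jnorm a b N U l i)
       \<le> ?W * (?h ^ (0 + 1) * jnorm a b N U 0 i) + (\<Sum>l=1..k. ?W * (?h ^ (l + 1) * jnorm a b N U l i))"
    by (intro add_mono sum_mono) auto
  also have "\<dots> = ?W * (\<Sum>l\<le>k. ?h ^ (l + 1) * jnorm a b N U l i)"
    by (simp add: atMost_atLeast0 sum.atLeast_Suc_atMost sum_distrib_left distrib_left)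
  finally have "sigma_jump c0 k a b N U i \<le> c0 * (?W * (\<Sum>l\<le>k. ?h ^ (l + 1) * jnorm a b N U l i))"
    unfolding sigma_jump_def using c0 by (intro mult_left_mono) auto
  hence "C * sigma_jump c0 k a b N U i \<le> C * (c0 * (?W * (\<Sum>l\<le>k. ?h ^ (l + 1) * jnorm a b N U l i)))"
    using C by (intro mult_left_mono) auto
  moreover have "sigma_jump c0 k a b N U i \<le> C * sigma_jump c0 k a b N U i"
    using sigma_jump_nonneg[OF c0 N ab, of k U i] C by (simp add: mult_le_cancel_right1)
  hence "sigma c0 C k a b N U i \<le> C * sigma_jump c0 k a b N U i"
    unfolding sigma_def sigma_ent_def by simp
  ultimately show ?thesis by (simp add: mult.assoc)
qed

lemma integral_le_continuous:
  fixes f g :: "real \<Rightarrow> real"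
  assumes "continuous_on {l..r} f" "continuous_on {l..r} g" "\<And>x. l \<le> x \<Longrightarrow> x \<le> r \<Longrightarrow> f x \<le> g x"
  shows "integral {l..r} f \<le> integral {l..r} g"
  by (rule integral_le) (use assms in \<open>auto intro: integrable_continuous_interval\<close>)

lemma integral_diff_continuous:
  fixes f g :: "real \<Rightarrow> real"
  assumes "continuous_on {l..r} f" "continuous_on {l..r} g"
  shows "integral {l..r} (\<lambda>x. f x - g x) = integral {l..r} f - integral {l..r} g"
  by (rule integral_diff) (use assms in \<open>auto intro: integrable_continuous_interval\<close>)

lemma integral_by_parts_poly:
  fixes f :: "real \<Rightarrow> real"
  assumes lr: "l \<le> r" and f: "\<And>x. (f has_real_derivative f' x) (at x)" and f': "continuous_on {l..r} f'"
  shows "integral {l..r} (\<lambda>x. f' x * poly p x)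
       = f r * poly p r - f l * poly p l - integral {l..r} (\<lambda>x. f x * poly (pderiv p) x)"
proof -
  have cf: "continuous_on {l..r} f" using f by (meson DERIV_isCont continuous_at_imp_continuous_on)
  have "((\<lambda>x. f' x * poly p x + f x * poly (pderiv p) x) has_integral (f r * poly p r - f l * poly p l)) {l..r}"
  proof (rule fundamental_theorem_of_calculus[OF lr])
    fix x
    have "((\<lambda>x. f x * poly p x) has_real_derivative f' x * poly p x + f x * poly (pderiv p) x) (at x)"
      using DERIV_mult[OF f poly_DERIV] by (simp add: mult.commute)
    thus "((\<lambda>x. f x * poly p x) has_vector_derivative f' x * poly p x + f x * poly (pderiv p) x) (at x within {l..r})"
      by (simp add: has_real_derivative_iff_has_vector_derivative has_vector_derivative_at_within)
  qed
  moreover have "integral {l..r} (\<lambda>x. f' x * poly p x + f x * poly (pderiv p) x)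
      = integral {l..r} (\<lambda>x. f' x * poly p x) + integral {l..r} (\<lambda>x. f x * poly (pderiv p) x)"
    by (rule integral_add) (auto intro!: integrable_continuous_interval continuous_intros f' cf)
  ultimately show ?thesis by (simp add: integral_unique)
qed

lemma integral_poly_mult_pderiv:
  fixes p :: "real poly" assumes "l \<le> r"
  shows "integral {l..r} (\<lambda>x. poly p x * poly (pderiv p) x) = ((poly p r)\<^sup>2 - (poly p l)\<^sup>2) / 2"
proof -
  have "((\<lambda>x. poly p x * poly (pderiv p) x) has_integral ((poly p r)\<^sup>2 / 2 - (poly p l)\<^sup>2 / 2)) {l..r}"
  proof (rule fundamental_theorem_of_calculus[OF assms, where f = "\<lambda>x. (poly p x)\<^sup>2 / 2"])
    fix x
    have "((\<lambda>x. (poly p x)\<^sup>2 / 2) has_real_derivative poly p x * poly (pderiv p) x) (at x)"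
      by (auto intro!: derivative_eq_intros poly_DERIV simp: power2_eq_square)
    thus "((\<lambda>x. (poly p x)\<^sup>2 / 2) has_vector_derivative poly p x * poly (pderiv p) x) (at x within {l..r})"
      by (simp add: has_real_derivative_iff_has_vector_derivative has_vector_derivative_at_within)
  qed
  thus ?thesis by (simp add: integral_unique diff_divide_distrib)
qed

lemma power_Suc_sq: "(x ^ Suc k)\<^sup>2 = (x::'a::monoid_mult) ^ (2 * k + 2)"
proof -
  have "2 * k + 2 = Suc k * 2" by simp
  thus ?thesis by (simp only: power_mult)
qed

lemma le_average_if_sq_le_mult:
  fixes P X Y :: real
  assumes "0 \<le> P" "0 \<le> X" "0 \<le> Y" "P\<^sup>2 \<le> X * Y"
  shows "P \<le> (X + Y) / 2"
proof -
  have "X * Y \<le> ((X + Y) / 2)\<^sup>2"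
    using zero_le_power2[of "(X - Y) / 2"] by (simp add: power2_eq_square field_simps)
  hence "P\<^sup>2 \<le> ((X + Y) / 2)\<^sup>2" using assms by linarith
  thus ?thesis using assms by (simp add: power2_le_iff_abs_le)
qed

definition proj_err :: "nat \<Rightarrow> real \<Rightarrow> real \<Rightarrow> nat \<Rightarrow> (real \<Rightarrow> real) \<Rightarrow> (nat \<Rightarrow> real poly) \<Rightarrow> nat \<Rightarrow> real poly" where
  "proj_err k a b N g U i = radau_proj k (xL a b N i) (hh a b N) g - U i"

section \<open>The error equation at a fixed time\<close>

locale noes_fixed_time =
  fixes a b c0 C :: real and k N :: nat and u :: "real \<Rightarrow> real \<Rightarrow> real"
    and U dU :: "nat \<Rightarrow> real poly" and t B Ci Ce :: real
  assumes ab: "a < b" and k1: "1 \<le> k" and c0: "0 < c0" and C1: "1 < C" and N1: "1 \<le> N"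
    and smooth: "smooth2 u"
    and pde: "\<forall>x. Dt u x t + Dx u x t = 0"
    and periodic: "\<forall>x s. u (x + (b - a)) s = u x s"
    and degU: "\<forall>i<N. degree (U i) \<le> k"
    and scheme: "\<forall>i<N. \<forall>w. degree w \<le> k \<longrightarrow> noes_eq c0 C k a b N U dU i w"
    and B: "\<forall>m x. m \<le> k + 2 \<longrightarrow> a \<le> x \<longrightarrow> x \<le> b \<longrightarrow> \<bar>Dxn u m x t\<bar> \<le> B"
    and inverse: "inverse_ineq_const k Ci"
    and approx: "radau_approx_const k Ce"
begin

abbreviation h where "h \<equiv> hh a b N"
abbreviation xl where "xl i \<equiv> xL a b N i"
abbreviation Pu where "Pu i \<equiv> radau_proj k (xl i) h (\<lambda>x. u x t)"
abbreviation Put where "Put i \<equiv> radau_proj k (xl i) h (\<lambda>x. Dt u x t)"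
abbreviation xi where "xi i \<equiv> proj_err k a b N (\<lambda>x. u x t) U i"
abbreviation xi' where "xi' i \<equiv> proj_err k a b N (\<lambda>x. Dt u x t) dU i"
abbreviation xi_sq where "xi_sq i \<equiv> integral {xl i..xl i + h} (\<lambda>x. (poly (xi i) x)\<^sup>2)"

lemma Ci: "0 < Ci"
  using inverse unfolding inverse_ineq_const_def by simp

lemma inverse_ineq:
  "0 < h' \<Longrightarrow> degree p \<le> k \<Longrightarrow> l \<le> k \<Longrightarrow> al \<le> x \<Longrightarrow> x \<le> al + h' \<Longrightarrow>
   (poly ((pderiv ^^ l) p) x)\<^sup>2 * h' ^ (2 * l + 1) \<le> Ci * integral {al..al + h'} (\<lambda>x. (poly p x)\<^sup>2)"
  using inverse unfolding inverse_ineq_const_def by blast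

lemma Ce: "0 < Ce"
  using approx unfolding radau_approx_const_def by simp

lemma radau_approx:
  "0 < h' \<Longrightarrow> \<forall>m y. (f m has_real_derivative f (Suc m) y) (at y) \<Longrightarrow>
   \<forall>y. al \<le> y \<and> y \<le> al + h' \<longrightarrow> \<bar>f (Suc k) y\<bar> \<le> M \<Longrightarrow> al \<le> x \<Longrightarrow> x \<le> al + h' \<Longrightarrow>
   \<bar>f 0 x - poly (radau_proj k al h' (f 0)) x\<bar> \<le> Ce * M * h' ^ Suc k"
  using approx unfolding radau_approx_const_def by blast

lemma B0: "0 \<le> B"
proof -
  have "\<bar>Dxn u 0 a t\<bar> \<le> B" using B[rule_format, of 0 a] ab by simp
  thus ?thesis by (rule order_trans[OF abs_ge_zero])
qed

definition ux :: "nat \<Rightarrow> real \<Rightarrow> real" where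
  "ux m y = Dxn u m y t"

lemma h_pos: "0 < h"
  using hh_pos[OF ab N1] .

lemma poly_xi: "poly (xi i) x = poly (Pu i) x - poly (U i) x"
  unfolding proj_err_def by simp

lemma degree_xi: "i < N \<Longrightarrow> degree (xi i) \<le> k"
  unfolding proj_err_def using degU degree_radau_proj[OF h_pos] by (auto intro!: degree_diff_le)

lemma xi_sq_nonneg: "0 \<le> xi_sq i"
  by (auto intro!: integral_nonneg integrable_continuous_interval continuous_intros)

lemma ux_has_derivative: "\<forall>m y. (ux m has_real_derivative ux (Suc m) y) (at y)"
  unfolding ux_def using Dxn_has_derivative[OF smooth] by blast

lemma ux_bound: "i < N \<Longrightarrow> m \<le> k + 2 \<Longrightarrow> xl i \<le> y \<Longrightarrow> y \<le> xl i + h \<Longrightarrow> \<bar>ux m y\<bar> \<le> B"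
  unfolding ux_def using B cell_subset_domain[OF ab] by blast

lemma ux_0: "ux 0 = (\<lambda>x. u x t)"
  by (simp add: ux_def fun_eq_iff)

lemma radau_error_u:
  assumes "i < N" "xl i \<le> x" "x \<le> xl i + h"
  shows "\<bar>u x t - poly (Pu i) x\<bar> \<le> Ce * B * h ^ Suc k"
  using radau_approx[OF h_pos ux_has_derivative, of "xl i" B x] ux_bound assms by (simp add: ux_0)

lemma radau_error_ut:
  assumes i: "i < N" and x: "xl i \<le> x" "x \<le> xl i + h"
  shows "\<bar>Dt u x t - poly (Put i) x\<bar> \<le> Ce * B * h ^ Suc k"
proof -
  define f where "f m y = - ux (Suc m) y" for m y
  have "\<forall>m y. (f m has_real_derivative f (Suc m) y) (at y)"
    unfolding f_def using ux_has_derivative by (auto intro!: derivative_intros)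
  moreover have "\<forall>y. xl i \<le> y \<and> y \<le> xl i + h \<longrightarrow> \<bar>f (Suc k) y\<bar> \<le> B"
    unfolding f_def using ux_bound[OF i] by simp
  moreover have "f 0 = (\<lambda>x. Dt u x t)"
    using pde by (auto simp: f_def ux_def Dxn_Suc fun_eq_iff add_eq_0_iff)
  ultimately show ?thesis using radau_approx[OF h_pos, of f "xl i" B x] x by simp
qed

lemma taylor_error_u:
  assumes i: "i < N" and n: "n \<le> k + 1"
    and x: "xl i \<le> x" "x \<le> xl i + h" and c: "xl i \<le> c" "c \<le> xl i + h"
  shows "\<bar>u x t - poly (taylor_poly ux c n) x\<bar> \<le> B * h ^ Suc n"
proof -
  have "\<bar>ux 0 x - poly (taylor_poly ux c n) x\<bar> \<le> B * \<bar>x - c\<bar> ^ Suc n / fact (Suc n)"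
    using ux_has_derivative ux_bound[OF i] n c x by (intro taylor_poly_error) auto
  also have "\<dots> \<le> B * \<bar>x - c\<bar> ^ Suc n"
    using frac_le[of "B * \<bar>x - c\<bar> ^ Suc n" "B * \<bar>x - c\<bar> ^ Suc n" 1 "fact (Suc n)"] B0 fact_ge_1[of "Suc n"]
    by simp
  also have "\<dots> \<le> B * h ^ Suc n"
    using x c B0 by (intro mult_left_mono power_mono) auto
  finally show ?thesis by (simp add: ux_0)
qed

definition proj_taylor_gap :: real where
  "proj_taylor_gap = (Ce + 1) * B * h ^ Suc k"

lemma proj_taylor_gap_nonneg: "0 \<le> proj_taylor_gap"
  unfolding proj_taylor_gap_def using Ce B0 h_pos by simp

lemma Pu_minus_taylor:
  assumes "i < N" "xl i \<le> x" "x \<le> xl i + h" "xl i \<le> c" "c \<le> xl i + h"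
  shows "\<bar>poly (Pu i) x - poly (taylor_poly ux c k) x\<bar> \<le> proj_taylor_gap"
  using radau_error_u[of i x] taylor_error_u[of i k x c] assms
  unfolding proj_taylor_gap_def by (simp add: algebra_simps)

definition taylor_dev :: "nat \<Rightarrow> real \<Rightarrow> real" where
  "taylor_dev i c = integral {xl i..xl i + h} (\<lambda>x. (poly (U i - taylor_poly ux c k) x)\<^sup>2)"

lemma taylor_dev_bound:
  assumes i: "i < N" and c: "xl i \<le> c" "c \<le> xl i + h"
  shows "taylor_dev i c \<le> 2 * xi_sq i + 2 * h * proj_taylor_gap\<^sup>2"
proof -
  have "taylor_dev i c \<le> integral {xl i..xl i + h} (\<lambda>x. 2 * (poly (xi i) x)\<^sup>2 + 2 * proj_taylor_gap\<^sup>2)"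
    unfolding taylor_dev_def
  proof (rule integral_le_continuous)
    fix x assume x: "xl i \<le> x" "x \<le> xl i + h"
    define A where "A = poly (Pu i) x - poly (taylor_poly ux c k) x"
    have "A\<^sup>2 \<le> proj_taylor_gap\<^sup>2"
      using Pu_minus_taylor[OF i x c] proj_taylor_gap_nonneg unfolding A_def
      by (simp add: abs_le_square_iff[symmetric])
    moreover have "poly (U i - taylor_poly ux c k) x = A - poly (xi i) x"
      unfolding A_def poly_xi by simp
    moreover have "(A - X)\<^sup>2 \<le> 2 * A\<^sup>2 + 2 * X\<^sup>2" for X
      using zero_le_power2[of "A + X"] by (simp add: power2_eq_square algebra_simps)
    ultimately show "(poly (U i - taylor_poly ux c k) x)\<^sup>2 \<le> 2 * (poly (xi i) x)\<^sup>2 + 2 * proj_taylor_gap\<^sup>2"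
      by (smt (verit))
  qed (auto intro!: continuous_intros)
  also have "\<dots> = 2 * xi_sq i + 2 * h * proj_taylor_gap\<^sup>2"
    using h_pos by (subst integral_add) (auto intro!: integrable_continuous_interval continuous_intros)
  finally show ?thesis .
qed

lemma Pu_oscillation:
  assumes i: "i < N" and y: "xl i \<le> y" "y \<le> xl i + h"
  shows "\<bar>poly (Pu i) y - u (xl i + h) t\<bar> \<le> (Ce * h ^ k + 1) * B * h"
proof -
  have "\<bar>u y t - poly (taylor_poly ux (xl i + h) 0) y\<bar> \<le> B * h ^ Suc 0"
    using h_pos y by (intro taylor_error_u[OF i]) auto
  hence "\<bar>u y t - u (xl i + h) t\<bar> \<le> B * h" by (simp add: poly_taylor_poly ux_0)
  thus ?thesis using radau_error_u[OF i y] by (simp add: algebra_simps)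
qed

definition grad_bound :: real where
  "grad_bound = sqrt Ci * B * (Ce * (b - a) ^ k + 1)"

lemma grad_bound_nonneg: "0 \<le> grad_bound"
  unfolding grad_bound_def using Ci B0 Ce ab by simp

text \<open>By the inverse inequality, since \<open>P\<^sup>- u\<close> deviates from a constant by \<open>O(h)\<close> on a cell.\<close>

lemma pderiv_Pu_bound:
  assumes i: "i < N" and x: "xl i \<le> x" "x \<le> xl i + h"
  shows "\<bar>poly (pderiv (Pu i)) x\<bar> \<le> grad_bound"
proof -
  define p where "p = Pu i - [:u (xl i + h) t:]"
  define G where "G = (Ce * h ^ k + 1) * B"
  have G: "0 \<le> G" unfolding G_def using Ce B0 h_pos by simp
  have "(poly (pderiv p) x)\<^sup>2 * h ^ 3 = (poly ((pderiv ^^ 1) p) x)\<^sup>2 * h ^ (2 * 1 + 1)" by simp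
  also have "\<dots> \<le> Ci * integral {xl i..xl i + h} (\<lambda>x. (poly p x)\<^sup>2)"
    using h_pos k1 x degree_radau_proj[OF h_pos] unfolding p_def
    by (intro inverse_ineq) (auto intro!: degree_diff_le)
  also have "\<dots> \<le> Ci * integral {xl i..xl i + h} (\<lambda>x. (G * h)\<^sup>2)"
  proof (intro mult_left_mono integral_le_continuous)
    fix y assume "xl i \<le> y" "y \<le> xl i + h"
    hence "\<bar>poly p y\<bar> \<le> G * h" using Pu_oscillation[OF i] unfolding p_def G_def by simp
    thus "(poly p y)\<^sup>2 \<le> (G * h)\<^sup>2" by (simp add: abs_le_square_iff[symmetric])
  qed (use Ci in \<open>auto intro!: continuous_intros\<close>)
  also have "\<dots> = (Ci * G\<^sup>2) * h ^ 3" using h_pos by (simp add: power2_eq_square power3_eq_cube)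
  finally have "(poly (pderiv (Pu i)) x)\<^sup>2 \<le> Ci * G\<^sup>2"
    using h_pos unfolding p_def by (simp add: pderiv_diff pderiv_pCons)
  hence "\<bar>poly (pderiv (Pu i)) x\<bar> \<le> sqrt Ci * G"
    using G Ci by (metis real_sqrt_abs real_sqrt_le_mono real_sqrt_mult real_sqrt_pow2_iff abs_of_nonneg)
  also have "\<dots> \<le> grad_bound"
  proof -
    have "h ^ k \<le> (b - a) ^ k" using hh_le[OF ab N1] h_pos by (intro power_mono) auto
    hence "G \<le> B * (Ce * (b - a) ^ k + 1)"
      unfolding G_def using Ce B0 by (simp add: mult.commute mult_left_mono)
    thus ?thesis unfolding grad_bound_def using Ci by (simp add: mult.assoc mult_left_mono)
  qed
  finally show ?thesis .
qed

text \<open>The exact solution is continuous and has a Taylor polynomial \<open>T\<close> at each interface; so the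
  jumps of \<open>U\<close> are jumps of \<open>U - T\<close>.\<close>

lemma jump_bound:
  assumes j: "j < N" and l: "l \<le> k"
  shows "\<bar>jmp a b N U l j\<bar>
      \<le> \<bar>poly ((pderiv ^^ l) (U (nxt N j) - taylor_poly ux (xl (nxt N j)) k)) (xl (nxt N j))\<bar>
        + \<bar>poly ((pderiv ^^ l) (U j - taylor_poly ux (xl j + h) k)) (xl j + h)\<bar>"
proof -
  have "ux l (xl (nxt N j)) = ux l (xl j + h)"
    using periodic_xL_nxt[OF j, of "ux l"] Dxn_periodic[OF periodic] by (simp add: ux_def)
  hence "jmp a b N U l j
      = poly ((pderiv ^^ l) (U (nxt N j) - taylor_poly ux (xl (nxt N j)) k)) (xl (nxt N j))
        - poly ((pderiv ^^ l) (U j - taylor_poly ux (xl j + h) k)) (xl j + h)"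
    unfolding jmp_def higher_pderiv_diff poly_diff higher_pderiv_taylor_poly[OF l] xR_eq by simp
  thus ?thesis by linarith
qed

lemma jump_term_bound:
  assumes i: "i < N" and q: "degree q \<le> k" and l: "l \<le> k"
    and y: "xl j \<le> y" "y \<le> xl j + h" and x: "xl i \<le> x" "x \<le> xl i + h"
  shows "h ^ (l + 2) * \<bar>poly ((pderiv ^^ l) q) y\<bar> * \<bar>poly (pderiv (xi i)) x\<bar>
       \<le> (Ci * integral {xl j..xl j + h} (\<lambda>x. (poly q x)\<^sup>2) + Ci * xi_sq i) / 2"
proof (rule le_average_if_sq_le_mult)
  have Q: "(poly ((pderiv ^^ l) q) y)\<^sup>2 * h ^ (2 * l + 1) \<le> Ci * integral {xl j..xl j + h} (\<lambda>x. (poly q x)\<^sup>2)"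
    by (rule inverse_ineq[OF h_pos q l y])
  have X: "(poly ((pderiv ^^ 1) (xi i)) x)\<^sup>2 * h ^ (2 * 1 + 1) \<le> Ci * xi_sq i"
    by (rule inverse_ineq[OF h_pos degree_xi[OF i] k1 x])
  show "0 \<le> Ci * integral {xl j..xl j + h} (\<lambda>x. (poly q x)\<^sup>2)"
    using Ci by (auto intro!: mult_nonneg_nonneg integral_nonneg integrable_continuous_interval continuous_intros)
  show "0 \<le> Ci * xi_sq i" using Ci xi_sq_nonneg by simp
  have "(h ^ (l + 2) * \<bar>poly ((pderiv ^^ l) q) y\<bar> * \<bar>poly (pderiv (xi i)) x\<bar>)\<^sup>2
      = ((poly ((pderiv ^^ l) q) y)\<^sup>2 * h ^ (2 * l + 1)) * ((poly ((pderiv ^^ 1) (xi i)) x)\<^sup>2 * h ^ (2 * 1 + 1))"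
    by (simp add: power_mult_distrib power_add power_mult algebra_simps power2_eq_square)
  also have "\<dots> \<le> (Ci * integral {xl j..xl j + h} (\<lambda>x. (poly q x)\<^sup>2)) * (Ci * xi_sq i)"
    using h_pos Ci xi_sq_nonneg
    by (intro mult_mono[OF Q X] mult_nonneg_nonneg integral_nonneg integrable_continuous_interval
          continuous_intros) auto
  finally show "(h ^ (l + 2) * \<bar>poly ((pderiv ^^ l) q) y\<bar> * \<bar>poly (pderiv (xi i)) x\<bar>)\<^sup>2
      \<le> Ci * integral {xl j..xl j + h} (\<lambda>x. (poly q x)\<^sup>2) * (Ci * xi_sq i)" .
qed (use h_pos in \<open>auto intro!: mult_nonneg_nonneg\<close>)

definition jump_control :: "nat \<Rightarrow> real" where
  "jump_control i = taylor_dev i (xl i) + taylor_dev (prv N i) (xl (prv N i) + h)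
     + taylor_dev (nxt N i) (xl (nxt N i)) + taylor_dev i (xl i + h) + 4 * xi_sq i"

lemma jnorm_term_bound:
  assumes i: "i < N" and l: "l \<le> k" and x: "xl i \<le> x" "x \<le> xl i + h"
  shows "h ^ (l + 2) * jnorm a b N U l i * \<bar>poly (pderiv (xi i)) x\<bar> \<le> Ci / 2 * jump_control i"
proof -
  define D where "D = \<bar>poly (pderiv (xi i)) x\<bar>"
  define E where "E j c = \<bar>poly ((pderiv ^^ l) (U j - taylor_poly ux c k)) c\<bar>" for j c
  have A: "h ^ (l + 2) * E j c * D \<le> (Ci * taylor_dev j c + Ci * xi_sq i) / 2"
    if "j < N" "c = xl j \<or> c = xl j + h" for j c
    unfolding E_def D_def taylor_dev_def using that h_pos degU
    by (intro jump_term_bound[OF i _ l _ _ x]) (auto intro!: degree_diff_le simp: degree_taylor_poly)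
  have pi: "prv N i < N" and ni: "nxt N i < N" using prv_less nxt_less N1 by auto
  have "jnorm a b N U l i \<le> E i (xl i) + E (prv N i) (xl (prv N i) + h) + E (nxt N i) (xl (nxt N i)) + E i (xl i + h)"
    using jump_bound[OF pi l] jump_bound[OF i l] unfolding jnorm_def E_def nxt_prv[OF i] by linarith
  hence "h ^ (l + 2) * jnorm a b N U l i * D
      \<le> h ^ (l + 2) * (E i (xl i) + E (prv N i) (xl (prv N i) + h) + E (nxt N i) (xl (nxt N i)) + E i (xl i + h)) * D"
    using h_pos unfolding D_def by (intro mult_right_mono mult_left_mono) auto
  also have "\<dots> = h ^ (l + 2) * E i (xl i) * D + h ^ (l + 2) * E (prv N i) (xl (prv N i) + h) * D
      + h ^ (l + 2) * E (nxt N i) (xl (nxt N i)) * D + h ^ (l + 2) * E i (xl i + h) * D"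
    by (simp add: algebra_simps)
  also have "\<dots> \<le> (Ci * taylor_dev i (xl i) + Ci * xi_sq i) / 2
      + (Ci * taylor_dev (prv N i) (xl (prv N i) + h) + Ci * xi_sq i) / 2
      + (Ci * taylor_dev (nxt N i) (xl (nxt N i)) + Ci * xi_sq i) / 2
      + (Ci * taylor_dev i (xl i + h) + Ci * xi_sq i) / 2"
    by (intro add_mono A i pi ni) auto
  also have "\<dots> = Ci / 2 * jump_control i"
    unfolding jump_control_def by (simp add: field_simps)
  finally show ?thesis unfolding D_def .
qed

definition visc_const :: real where
  "visc_const = C * c0 * (1 + real k * real (k + 1)) * real (k + 1) * Ci / 2"

lemma visc_const_nonneg: "0 \<le> visc_const"
  unfolding visc_const_def using C1 c0 Ci by simp

lemma sigma_pderiv_xi_bound: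
  assumes i: "i < N" and x: "xl i \<le> x" "x \<le> xl i + h"
  shows "h * sigma c0 C k a b N U i * \<bar>poly (pderiv (xi i)) x\<bar> \<le> visc_const * jump_control i"
proof -
  define D where "D = \<bar>poly (pderiv (xi i)) x\<bar>"
  define W where "W = C * c0 * (1 + real k * real (k + 1))"
  have W: "0 \<le> W" unfolding W_def using C1 c0 by simp
  have "h * sigma c0 C k a b N U i * D \<le> h * (W * (\<Sum>l\<le>k. h ^ (l + 1) * jnorm a b N U l i)) * D"
    using sigma_le_jumps[OF c0 C1 N1 ab, of k U i] h_pos unfolding W_def D_def
    by (intro mult_right_mono mult_left_mono) auto
  also have "\<dots> = W * (\<Sum>l\<le>k. h ^ (l + 2) * jnorm a b N U l i * D)"
    by (simp add: sum_distrib_left sum_distrib_right algebra_simps)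
  also have "\<dots> \<le> W * (\<Sum>l\<le>k. Ci / 2 * jump_control i)"
    using jnorm_term_bound[OF i _ x] W unfolding D_def by (intro mult_left_mono sum_mono) auto
  also have "\<dots> = visc_const * jump_control i" unfolding W_def visc_const_def by simp
  finally show ?thesis unfolding D_def .
qed

text \<open>The artificial viscosity is dissipative up to the consistency error \<open>\<nu> \<partial>\<^sub>x(P\<^sup>- u) \<partial>\<^sub>x \<xi>\<close>, which is
  controlled by the jumps through \<open>\<sigma>\<close>.\<close>

lemma visc_term_bound:
  assumes i: "i < N"
  shows "sigma c0 C k a b N U i * integral {xl i..xl i + h}
           (\<lambda>x. nu a b N i x * poly (pderiv (U i)) x * poly (pderiv (xi i)) x)
       \<le> grad_bound * visc_const * jump_control i"
proof -
  let ?s = "sigma c0 C k a b N U i"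
  have s: "0 \<le> ?s" by (rule sigma_nonneg[OF c0 N1 ab])
  have "integral {xl i..xl i + h} (\<lambda>x. nu a b N i x * poly (pderiv (U i)) x * poly (pderiv (xi i)) x)
      \<le> integral {xl i..xl i + h} (\<lambda>x. grad_bound * \<bar>poly (pderiv (xi i)) x\<bar>)"
  proof (rule integral_le_continuous)
    fix x assume x: "xl i \<le> x" "x \<le> xl i + h"
    define v p e where "v = nu a b N i x" and "p = poly (pderiv (Pu i)) x" and "e = poly (pderiv (xi i)) x"
    have v: "0 \<le> v" "v \<le> 1" using nu_bounds[OF h_pos x] unfolding v_def by auto
    have "\<bar>p\<bar> \<le> grad_bound" unfolding p_def by (rule pderiv_Pu_bound[OF i x])
    moreover have "poly (pderiv (U i)) x = p - e"
      unfolding p_def e_def proj_err_def by (simp add: pderiv_diff)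
    moreover have "v * (p - e) * e \<le> \<bar>p\<bar> * \<bar>e\<bar>"
    proof -
      have "v * (p - e) * e = v * (p * e) - v * e\<^sup>2" by (simp add: algebra_simps power2_eq_square)
      also have "\<dots> \<le> v * \<bar>p * e\<bar>"
        using v mult_left_mono[OF abs_ge_self[of "p * e"] v(1)] by (smt (verit) zero_le_mult_iff zero_le_power2)
      also have "\<dots> \<le> \<bar>p\<bar> * \<bar>e\<bar>" using v by (simp add: abs_mult mult_left_le_one_le)
      finally show ?thesis .
    qed
    ultimately show "nu a b N i x * poly (pderiv (U i)) x * poly (pderiv (xi i)) x
        \<le> grad_bound * \<bar>poly (pderiv (xi i)) x\<bar>"
      unfolding v_def[symmetric] e_def[symmetric] by (smt (verit) abs_ge_zero mult_right_mono)
  qed (use h_pos in \<open>auto intro!: continuous_intros simp: nu_def\<close>)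
  hence "?s * integral {xl i..xl i + h} (\<lambda>x. nu a b N i x * poly (pderiv (U i)) x * poly (pderiv (xi i)) x)
      \<le> integral {xl i..xl i + h} (\<lambda>x. ?s * (grad_bound * \<bar>poly (pderiv (xi i)) x\<bar>))"
    using s by (simp add: mult_left_mono)
  also have "\<dots> \<le> integral {xl i..xl i + h} (\<lambda>x. grad_bound * visc_const * jump_control i / h)"
  proof (rule integral_le_continuous)
    fix x assume x: "xl i \<le> x" "x \<le> xl i + h"
    have "grad_bound * (h * ?s * \<bar>poly (pderiv (xi i)) x\<bar>) \<le> grad_bound * (visc_const * jump_control i)"
      using sigma_pderiv_xi_bound[OF i x] grad_bound_nonneg by (rule mult_left_mono)
    thus "?s * (grad_bound * \<bar>poly (pderiv (xi i)) x\<bar>) \<le> grad_bound * visc_const * jump_control i / h"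
      using h_pos by (simp add: field_simps)
  qed (auto intro!: continuous_intros)
  also have "\<dots> = grad_bound * visc_const * jump_control i" using h_pos by simp
  finally show ?thesis .
qed

lemma continuous_on_u: "continuous_on S (\<lambda>x. u x t)"
  using smooth2_continuous_on_x[OF smooth, of S "[]"] by simp

lemma continuous_on_Dt_u: "continuous_on S (\<lambda>x. Dt u x t)"
  using smooth2_continuous_on_x[OF smooth, of S "[False]"] by simp

lemma continuous_on_Dx_u: "continuous_on S (\<lambda>x. Dx u x t)"
  using smooth2_continuous_on_x[OF smooth, of S "[True]"] by simp

definition time_defect :: "nat \<Rightarrow> real" where
  "time_defect i = integral {xl i..xl i + h} (\<lambda>x. (Dt u x t - poly (Put i) x) * poly (xi i) x)"

definition visc_term :: "nat \<Rightarrow> real" where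
  "visc_term i = sigma c0 C k a b N U i *
     integral {xl i..xl i + h} (\<lambda>x. nu a b N i x * poly (pderiv (U i)) x * poly (pderiv (xi i)) x)"

lemma scheme_tested_with_xi:
  assumes i: "i < N"
  shows "integral {xl i..xl i + h} (\<lambda>x. poly (dU i) x * poly (xi i) x)
       = integral {xl i..xl i + h} (\<lambda>x. poly (U i) x * poly (pderiv (xi i)) x)
         - poly (U i) (xl i + h) * poly (xi i) (xl i + h)
         + poly (U (prv N i)) (xl (prv N i) + h) * poly (xi i) (xl i) - visc_term i"
  using scheme i degree_xi[OF i] unfolding noes_eq_def fhat_eq_upwind xR_eq visc_term_def by blast

text \<open>The exact solution satisfies the scheme up to \<open>time_defect\<close>: the flux terms match because
  \<open>P\<^sup>-\<close> interpolates \<open>u\<close> at the upwind interface, and the volume term because \<open>u - P\<^sup>- u \<bottom> \<partial>\<^sub>x \<xi>\<close>.\<close>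

lemma exact_solution_tested_with_xi:
  assumes i: "i < N"
  shows "integral {xl i..xl i + h} (\<lambda>x. poly (Put i) x * poly (xi i) x)
       = integral {xl i..xl i + h} (\<lambda>x. poly (Pu i) x * poly (pderiv (xi i)) x)
         - poly (Pu i) (xl i + h) * poly (xi i) (xl i + h)
         + poly (Pu (prv N i)) (xl (prv N i) + h) * poly (xi i) (xl i) - time_defect i"
proof -
  let ?L = "xl i" and ?R = "xl i + h" and ?\<xi> = "xi i"
  have pv: "prv N i < N" using prv_less[OF N1] .
  have "integral {?L..?R} (\<lambda>x. poly (Put i) x * poly ?\<xi> x)
      = integral {?L..?R} (\<lambda>x. Dt u x t * poly ?\<xi> x) - time_defect i"
  proof -
    have "time_defect i = integral {?L..?R} (\<lambda>x. Dt u x t * poly ?\<xi> x - poly (Put i) x * poly ?\<xi> x)"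
      unfolding time_defect_def by (simp add: left_diff_distrib)
    also have "\<dots> = integral {?L..?R} (\<lambda>x. Dt u x t * poly ?\<xi> x) - integral {?L..?R} (\<lambda>x. poly (Put i) x * poly ?\<xi> x)"
      by (intro integral_diff_continuous continuous_intros continuous_on_Dt_u)
    finally show ?thesis by simp
  qed
  also have "integral {?L..?R} (\<lambda>x. Dt u x t * poly ?\<xi> x) = integral {?L..?R} (\<lambda>x. - (Dx u x t * poly ?\<xi> x))"
  proof (intro integral_cong)
    fix x
    have "Dt u x t = - Dx u x t" using pde by (simp add: eq_neg_iff_add_eq_0)
    thus "Dt u x t * poly ?\<xi> x = - (Dx u x t * poly ?\<xi> x)" by simp
  qed
  also have "\<dots> = - integral {?L..?R} (\<lambda>x. Dx u x t * poly ?\<xi> x)"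
    by (rule integral_neg)
  also have "integral {?L..?R} (\<lambda>x. Dx u x t * poly ?\<xi> x)
      = u ?R t * poly ?\<xi> ?R - u ?L t * poly ?\<xi> ?L - integral {?L..?R} (\<lambda>x. u x t * poly (pderiv ?\<xi>) x)"
    using h_pos smooth2_has_derivative_x[OF smooth, of "[]" t]
    by (intro integral_by_parts_poly continuous_on_Dx_u) auto
  also have "integral {?L..?R} (\<lambda>x. u x t * poly (pderiv ?\<xi>) x)
      = integral {?L..?R} (\<lambda>x. poly (Pu i) x * poly (pderiv ?\<xi>) x)"
  proof -
    have "degree (pderiv ?\<xi>) < k" using degree_xi[OF i] k1 by (simp add: degree_pderiv)
    hence "integral {?L..?R} (\<lambda>x. (u x t - poly (Pu i) x) * poly (pderiv ?\<xi>) x) = 0"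
      by (rule radau_proj_orth[OF h_pos continuous_on_u])
    moreover have "integral {?L..?R} (\<lambda>x. (u x t - poly (Pu i) x) * poly (pderiv ?\<xi>) x)
        = integral {?L..?R} (\<lambda>x. u x t * poly (pderiv ?\<xi>) x) - integral {?L..?R} (\<lambda>x. poly (Pu i) x * poly (pderiv ?\<xi>) x)"
      unfolding left_diff_distrib by (intro integral_diff_continuous continuous_intros continuous_on_u)
    ultimately show ?thesis by simp
  qed
  also have "u ?R t = poly (Pu i) ?R"
    by (simp add: poly_radau_proj_right[OF h_pos])
  also have "u ?L t = poly (Pu (prv N i)) (xl (prv N i) + h)"
    using periodic_xL_nxt[OF pv, of "\<lambda>x. u x t"] periodic nxt_prv[OF i]
    by (simp add: poly_radau_proj_right[OF h_pos])
  finally show ?thesis by simp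
qed

lemma cell_energy_identity:
  assumes i: "i < N"
  shows "integral {xl i..xl i + h} (\<lambda>x. poly (xi i) x * poly (xi' i) x)
       = (poly (xi (prv N i)) (xl (prv N i) + h))\<^sup>2 / 2 - (poly (xi i) (xl i + h))\<^sup>2 / 2
         - (poly (xi i) (xl i) - poly (xi (prv N i)) (xl (prv N i) + h))\<^sup>2 / 2
         - time_defect i + visc_term i"
proof -
  let ?L = "xl i" and ?R = "xl i + h" and ?\<xi> = "xi i" and ?Rp = "xl (prv N i) + h"
  define IP where "IP = integral {?L..?R} (\<lambda>x. poly (Pu i) x * poly (pderiv ?\<xi>) x)"
  define IU where "IU = integral {?L..?R} (\<lambda>x. poly (U i) x * poly (pderiv ?\<xi>) x)"
  have "integral {?L..?R} (\<lambda>x. poly ?\<xi> x * poly (xi' i) x)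
      = integral {?L..?R} (\<lambda>x. poly (Put i) x * poly ?\<xi> x - poly (dU i) x * poly ?\<xi> x)"
    unfolding proj_err_def[of k a b N "\<lambda>x. Dt u x t"] by (simp add: algebra_simps)
  also have "\<dots> = integral {?L..?R} (\<lambda>x. poly (Put i) x * poly ?\<xi> x)
        - integral {?L..?R} (\<lambda>x. poly (dU i) x * poly ?\<xi> x)"
    by (intro integral_diff_continuous continuous_intros)
  also have "\<dots> = (IP - poly (Pu i) ?R * poly ?\<xi> ?R + poly (Pu (prv N i)) ?Rp * poly ?\<xi> ?L - time_defect i)
        - (IU - poly (U i) ?R * poly ?\<xi> ?R + poly (U (prv N i)) ?Rp * poly ?\<xi> ?L - visc_term i)"
    unfolding exact_solution_tested_with_xi[OF i] scheme_tested_with_xi[OF i] IP_def IU_def ..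
  also have "\<dots> = - (poly (Pu i) ?R - poly (U i) ?R) * poly ?\<xi> ?R
        + (poly (Pu (prv N i)) ?Rp - poly (U (prv N i)) ?Rp) * poly ?\<xi> ?L + (IP - IU) - time_defect i + visc_term i"
    by (simp add: algebra_simps)
  also have "\<dots> = - poly ?\<xi> ?R * poly ?\<xi> ?R + poly (xi (prv N i)) ?Rp * poly ?\<xi> ?L
        + (IP - IU) - time_defect i + visc_term i"
    by (simp only: poly_xi)
  also have "IP - IU = integral {?L..?R} (\<lambda>x. poly ?\<xi> x * poly (pderiv ?\<xi>) x)"
    unfolding IP_def IU_def poly_xi left_diff_distrib
    by (intro integral_diff_continuous[symmetric] continuous_intros)
  also have "\<dots> = ((poly ?\<xi> ?R)\<^sup>2 - (poly ?\<xi> ?L)\<^sup>2) / 2"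
    using h_pos by (intro integral_poly_mult_pderiv) simp
  finally show ?thesis by (simp add: power2_eq_square field_simps)
qed

lemma time_defect_bound:
  assumes i: "i < N"
  shows "- time_defect i \<le> h * (Ce * B * h ^ Suc k)\<^sup>2 / 2 + xi_sq i / 2"
proof -
  define \<epsilon> where "\<epsilon> = Ce * B * h ^ Suc k"
  have "- time_defect i = integral {xl i..xl i + h} (\<lambda>x. - ((Dt u x t - poly (Put i) x) * poly (xi i) x))"
    unfolding time_defect_def by (simp add: integral_neg)
  also have "\<dots> \<le> integral {xl i..xl i + h} (\<lambda>x. \<epsilon>\<^sup>2 / 2 + (poly (xi i) x)\<^sup>2 / 2)"
  proof (rule integral_le_continuous)
    fix x assume x: "xl i \<le> x" "x \<le> xl i + h"
    define e where "e = Dt u x t - poly (Put i) x"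
    have "e\<^sup>2 \<le> \<epsilon>\<^sup>2"
      using radau_error_ut[OF i x] unfolding e_def \<epsilon>_def by (simp add: abs_le_square_iff[symmetric])
    moreover have "- (e * poly (xi i) x) \<le> e\<^sup>2 / 2 + (poly (xi i) x)\<^sup>2 / 2"
      using zero_le_power2[of "e + poly (xi i) x"] by (simp add: power2_eq_square algebra_simps)
    ultimately show "- ((Dt u x t - poly (Put i) x) * poly (xi i) x) \<le> \<epsilon>\<^sup>2 / 2 + (poly (xi i) x)\<^sup>2 / 2"
      unfolding e_def by linarith
  qed (auto intro!: continuous_intros continuous_on_Dt_u)
  also have "\<dots> = h * \<epsilon>\<^sup>2 / 2 + xi_sq i / 2"
    using h_pos by (subst integral_add) (auto intro!: integrable_continuous_interval continuous_intros)
  finally show ?thesis unfolding \<epsilon>_def .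
qed

lemma N_mult_h: "real N * h = b - a"
  by (rule real_mult_hh[OF N1])


lemma sum_jump_control:
  "(\<Sum>i<N. jump_control i) \<le> 12 * (\<Sum>i<N. xi_sq i) + 8 * (b - a) * (Ce + 1)\<^sup>2 * B\<^sup>2 * h ^ (2 * k + 2)"
proof -
  define E where "E = 2 * h * proj_taylor_gap\<^sup>2"
  have L: "taylor_dev i (xl i) \<le> 2 * xi_sq i + E" and R: "taylor_dev i (xl i + h) \<le> 2 * xi_sq i + E"
    if "i < N" for i
    using taylor_dev_bound[OF that] h_pos unfolding E_def by auto
  have "(\<Sum>i<N. jump_control i)
      = 2 * (\<Sum>i<N. taylor_dev i (xl i)) + 2 * (\<Sum>i<N. taylor_dev i (xl i + h)) + 4 * (\<Sum>i<N. xi_sq i)"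
    unfolding jump_control_def
    using sum_prv_reindex[OF N1, of "\<lambda>j. taylor_dev j (xl j + h)"]
      sum_nxt_reindex[OF N1, of "\<lambda>j. taylor_dev j (xl j)"]
    by (simp add: sum.distrib sum_distrib_left)
  also have "\<dots> \<le> 2 * (\<Sum>i<N. 2 * xi_sq i + E) + 2 * (\<Sum>i<N. 2 * xi_sq i + E) + 4 * (\<Sum>i<N. xi_sq i)"
    using L R by (intro add_mono mult_left_mono sum_mono) auto
  also have "\<dots> = 12 * (\<Sum>i<N. xi_sq i) + 4 * real N * E"
    by (simp add: sum.distrib sum_distrib_left[symmetric])
  also have "4 * real N * E = 8 * (b - a) * (Ce + 1)\<^sup>2 * B\<^sup>2 * h ^ (2 * k + 2)"
    unfolding E_def proj_taylor_gap_def using N_mult_h power_Suc_sq[of h k] by (simp add: power_mult_distrib)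
  finally show ?thesis .
qed

lemma sum_cell_energy:
  "(\<Sum>i<N. integral {xl i..xl i + h} (\<lambda>x. poly (xi i) x * poly (xi' i) x))
     \<le> (b - a) * Ce\<^sup>2 * B\<^sup>2 * h ^ (2 * k + 2) / 2 + (\<Sum>i<N. xi_sq i) / 2
       + grad_bound * visc_const * (\<Sum>i<N. jump_control i)"
proof -
  define r where "r j = (poly (xi j) (xl j + h))\<^sup>2 / 2" for j
  define \<epsilon> where "\<epsilon> = h * (Ce * B * h ^ Suc k)\<^sup>2 / 2"
  have "(\<Sum>i<N. integral {xl i..xl i + h} (\<lambda>x. poly (xi i) x * poly (xi' i) x))
      \<le> (\<Sum>i<N. r (prv N i) - r i + (\<epsilon> + xi_sq i / 2) + grad_bound * visc_const * jump_control i)"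
  proof (rule sum_mono)
    fix i assume "i \<in> {..<N}"
    hence i: "i < N" by simp
    show "integral {xl i..xl i + h} (\<lambda>x. poly (xi i) x * poly (xi' i) x)
        \<le> r (prv N i) - r i + (\<epsilon> + xi_sq i / 2) + grad_bound * visc_const * jump_control i"
      using cell_energy_identity[OF i] time_defect_bound[OF i] visc_term_bound[OF i]
      unfolding r_def \<epsilon>_def visc_term_def
      by (smt (verit) zero_le_power2 divide_nonneg_nonneg)
  qed
  also have "\<dots> = real N * \<epsilon> + (\<Sum>i<N. xi_sq i) / 2 + grad_bound * visc_const * (\<Sum>i<N. jump_control i)"
    by (simp add: sum.distrib sum_subtractf sum_distrib_left sum_divide_distrib sum_prv_reindex[OF N1])
  also have "real N * \<epsilon> = (b - a) * Ce\<^sup>2 * B\<^sup>2 * h ^ (2 * k + 2) / 2"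
    unfolding \<epsilon>_def using N_mult_h power_Suc_sq[of h k] by (simp add: power_mult_distrib)
  finally show ?thesis .
qed

definition energy_const :: real where
  "energy_const = 1 + 24 * grad_bound * visc_const + (b - a) * Ce\<^sup>2 * B\<^sup>2
     + 16 * grad_bound * visc_const * (b - a) * (Ce + 1)\<^sup>2 * B\<^sup>2"

lemma energy_const_nonneg: "0 \<le> energy_const"
  unfolding energy_const_def using ab grad_bound_nonneg visc_const_nonneg
  by (auto intro!: add_nonneg_nonneg mult_nonneg_nonneg)

lemma energy_inequality:
  "2 * (\<Sum>i<N. integral {xl i..xl i + h} (\<lambda>x. poly (xi i) x * poly (xi' i) x))
     \<le> energy_const * ((\<Sum>i<N. xi_sq i) + h ^ (2 * k + 2))"
proof -
  define \<Phi> H K where "\<Phi> = (\<Sum>i<N. xi_sq i)" and "H = h ^ (2 * k + 2)" and "K = grad_bound * visc_const"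
  have K: "0 \<le> K" unfolding K_def using grad_bound_nonneg visc_const_nonneg by simp
  have "\<Phi> \<ge> 0" "H \<ge> 0" unfolding \<Phi>_def H_def using xi_sq_nonneg h_pos by (auto intro: sum_nonneg)
  have "2 * (\<Sum>i<N. integral {xl i..xl i + h} (\<lambda>x. poly (xi i) x * poly (xi' i) x))
      \<le> (b - a) * Ce\<^sup>2 * B\<^sup>2 * H + \<Phi> + 2 * K * (12 * \<Phi> + 8 * (b - a) * (Ce + 1)\<^sup>2 * B\<^sup>2 * H)"
    using sum_cell_energy mult_left_mono[OF sum_jump_control K] unfolding \<Phi>_def H_def K_def by linarith
  also have "\<dots> = (1 + 24 * K) * \<Phi> + ((b - a) * Ce\<^sup>2 * B\<^sup>2 + 16 * K * (b - a) * (Ce + 1)\<^sup>2 * B\<^sup>2) * H"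
    by (simp add: algebra_simps)
  also have "\<dots> \<le> energy_const * \<Phi> + energy_const * H"
  proof (intro add_mono mult_right_mono)
    have "0 \<le> (b - a) * Ce\<^sup>2 * B\<^sup>2" "0 \<le> 16 * K * (b - a) * (Ce + 1)\<^sup>2 * B\<^sup>2"
      using ab K by simp_all
    thus "1 + 24 * K \<le> energy_const"
      and "(b - a) * Ce\<^sup>2 * B\<^sup>2 + 16 * K * (b - a) * (Ce + 1)\<^sup>2 * B\<^sup>2 \<le> energy_const"
      unfolding energy_const_def K_def using K[unfolded K_def] by (simp_all add: mult.assoc)
  qed (use \<open>\<Phi> \<ge> 0\<close> \<open>H \<ge> 0\<close> in auto)
  finally show ?thesis unfolding \<Phi>_def H_def by (simp add: distrib_left)
qed

end

section \<open>The error estimate\<close>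


lemma l2_projection_error_le:
  fixes P U :: "real poly" and g :: "real \<Rightarrow> real"
  assumes lr: "l \<le> r" and g: "continuous_on {l..r} g" and deg: "degree (P - U) \<le> k"
    and proj: "\<forall>w. degree w \<le> k \<longrightarrow>
      integral {l..r} (\<lambda>x. poly U x * poly w x) = integral {l..r} (\<lambda>x. g x * poly w x)"
    and close: "\<forall>x\<in>{l..r}. \<bar>g x - poly P x\<bar> \<le> \<epsilon>"
  shows "integral {l..r} (\<lambda>x. (poly (P - U) x)\<^sup>2) \<le> (r - l) * \<epsilon>\<^sup>2"
proof -
  define \<xi> where "\<xi> = P - U"
  define I J where "I = integral {l..r} (\<lambda>x. (poly \<xi> x)\<^sup>2)" and "J = integral {l..r} (\<lambda>x. (poly P x - g x)\<^sup>2)"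
  have int: "f integrable_on {l..r}" if "continuous_on {l..r} f" for f :: "real \<Rightarrow> real"
    using that by (rule integrable_continuous_interval)
  have "I = integral {l..r} (\<lambda>x. poly P x * poly \<xi> x) - integral {l..r} (\<lambda>x. poly U x * poly \<xi> x)"
    unfolding I_def \<xi>_def
    by (simp add: power2_eq_square left_diff_distrib integral_diff_continuous continuous_intros)
  also have "integral {l..r} (\<lambda>x. poly U x * poly \<xi> x) = integral {l..r} (\<lambda>x. g x * poly \<xi> x)"
    using proj deg unfolding \<xi>_def by blast
  also have "integral {l..r} (\<lambda>x. poly P x * poly \<xi> x) - integral {l..r} (\<lambda>x. g x * poly \<xi> x)
      = integral {l..r} (\<lambda>x. (poly P x - g x) * poly \<xi> x)"
    unfolding left_diff_distrib using g by (intro integral_diff_continuous[symmetric] continuous_intros)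
  also have "\<dots> \<le> integral {l..r} (\<lambda>x. (poly P x - g x)\<^sup>2 / 2 + (poly \<xi> x)\<^sup>2 / 2)"
  proof (rule integral_le_continuous)
    have "Y * Z \<le> Y\<^sup>2 / 2 + Z\<^sup>2 / 2" for Y Z :: real
      using zero_le_power2[of "Y - Z"] by (simp add: power2_eq_square algebra_simps)
    thus "(poly P x - g x) * poly \<xi> x \<le> (poly P x - g x)\<^sup>2 / 2 + (poly \<xi> x)\<^sup>2 / 2" for x .
  qed (use g in \<open>auto intro!: continuous_intros\<close>)
  also have "\<dots> = J / 2 + I / 2" unfolding J_def I_def
    using g by (subst integral_add) (auto intro!: int continuous_intros)
  finally have "I \<le> J" by simp
  also have "J \<le> integral {l..r} (\<lambda>x. \<epsilon>\<^sup>2)" unfolding J_def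
  proof (rule integral_le_continuous)
    fix x assume "l \<le> x" "x \<le> r"
    hence "\<bar>poly P x - g x\<bar> \<le> \<epsilon>" using close by (simp add: abs_minus_commute)
    thus "(poly P x - g x)\<^sup>2 \<le> \<epsilon>\<^sup>2" by (simp add: abs_le_square_iff[symmetric] order_trans[OF abs_ge_zero])
  qed (use g in \<open>auto intro!: continuous_intros\<close>)
  also have "\<dots> = (r - l) * \<epsilon>\<^sup>2" using lr by simp
  finally show ?thesis unfolding I_def \<xi>_def .
qed

locale noes_semidiscrete =
  fixes a b T c0 C :: real and k N :: nat and u :: "real \<Rightarrow> real \<Rightarrow> real"
    and uh duh :: "real \<Rightarrow> nat \<Rightarrow> real poly" and B Ci Ce :: real
  assumes ab: "a < b" and T: "0 < T" and k1: "1 \<le> k" and c0: "0 < c0" and C1: "1 < C" and N1: "1 \<le> N"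
    and smooth: "smooth2 u"
    and pde: "\<forall>x. \<forall>t\<in>{0..T}. Dt u x t + Dx u x t = 0"
    and periodic: "\<forall>x t. u (x + (b - a)) t = u x t"
    and degU: "\<forall>t\<in>{0..T}. \<forall>i<N. degree (uh t i) \<le> k"
    and duh: "\<forall>t\<in>{0..T}. \<forall>i<N. \<forall>j. ((\<lambda>s. coeff (uh s i) j) has_real_derivative coeff (duh t i) j)
                                   (at t within {0..T})"
    and scheme: "\<forall>t\<in>{0..T}. \<forall>i<N. \<forall>w. degree w \<le> k \<longrightarrow> noes_eq c0 C k a b N (uh t) (duh t) i w"
    and init: "\<forall>i<N. \<forall>w. degree w \<le> k \<longrightarrow>
        integral {xL a b N i .. xR a b N i} (\<lambda>x. poly (uh 0 i) x * poly w x)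
      = integral {xL a b N i .. xR a b N i} (\<lambda>x. u x 0 * poly w x)"
    and B: "\<forall>m x t. m \<le> k + 2 \<longrightarrow> a \<le> x \<longrightarrow> x \<le> b \<longrightarrow> 0 \<le> t \<longrightarrow> t \<le> T \<longrightarrow> \<bar>Dxn u m x t\<bar> \<le> B"
    and inverse: "inverse_ineq_const k Ci"
    and approx: "radau_approx_const k Ce"
begin

abbreviation h where "h \<equiv> hh a b N"
abbreviation xl where "xl i \<equiv> xL a b N i"
abbreviation H where "H \<equiv> h ^ (2 * k + 2)"

definition energy :: "real \<Rightarrow> real" where
  "energy s = (\<Sum>i<N. integral {xl i..xl i + h} (\<lambda>x. (poly (proj_err k a b N (\<lambda>x. u x s) (uh s) i) x)\<^sup>2))"

lemma h_pos: "0 < h"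
  using hh_pos[OF ab N1] .

lemma fixed_time:
  assumes "s \<in> {0..T}"
  shows "noes_fixed_time a b c0 C k N u (uh s) (duh s) s B Ci Ce"
  using assms ab k1 c0 C1 N1 smooth pde periodic degU scheme B inverse approx
  by unfold_locales auto

abbreviation A where "A \<equiv> noes_fixed_time.energy_const a b c0 C k B Ci Ce"

lemma A_nonneg: "0 \<le> A"
  using noes_fixed_time.energy_const_nonneg[OF fixed_time, of 0] T by simp

lemma energy_has_derivative:
  assumes s: "s \<in> {0..T}"
  shows "(energy has_real_derivative
           2 * (\<Sum>i<N. integral {xl i..xl i + h} (\<lambda>x. poly (proj_err k a b N (\<lambda>x. u x s) (uh s) i) x *
                                                      poly (proj_err k a b N (\<lambda>x. Dt u x s) (duh s) i) x)))
         (at s within {0..T})"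
  unfolding energy_def sum_distrib_left
proof (rule DERIV_sum)
  fix i assume "i \<in> {..<N}"
  hence i: "i < N" by simp
  have "degree (duh s i) \<le> k"
    using degree_coeff_derivative_le[OF T s, of "\<lambda>s. uh s i" k "duh s i"] degU duh s i by blast
  moreover have "((\<lambda>s. coeff (proj_err k a b N (\<lambda>x. u x s) (uh s) i) j) has_real_derivative
      coeff (proj_err k a b N (\<lambda>x. Dt u x s) (duh s) i) j) (at s within {0..T})" for j
    unfolding proj_err_def coeff_diff
    using has_field_derivative_at_within[OF coeff_radau_proj_has_derivative[OF smooth]] duh s i
    by (intro DERIV_diff) auto
  ultimately show "((\<lambda>s. integral {xl i..xl i + h} (\<lambda>x. (poly (proj_err k a b N (\<lambda>x. u x s) (uh s) i) x)\<^sup>2))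
      has_real_derivative 2 * integral {xl i..xl i + h} (\<lambda>x. poly (proj_err k a b N (\<lambda>x. u x s) (uh s) i) x *
        poly (proj_err k a b N (\<lambda>x. Dt u x s) (duh s) i) x)) (at s within {0..T})"
    using s i degU h_pos degree_radau_proj[OF h_pos]
    by (intro integral_sq_poly_has_derivative[where k = k]) (auto simp: proj_err_def intro!: degree_diff_le)
qed

lemma energy_growth:
  assumes t: "t \<in> {0..T}"
  shows "energy t + H \<le> (energy 0 + H) * exp (A * t)"
proof (rule gronwall_exp_bound[OF A_nonneg _ _ t])
  fix s assume s: "s \<in> {0..T}"
  show "((\<lambda>s. energy s + H) has_real_derivative
      2 * (\<Sum>i<N. integral {xl i..xl i + h} (\<lambda>x. poly (proj_err k a b N (\<lambda>x. u x s) (uh s) i) x *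
                                                 poly (proj_err k a b N (\<lambda>x. Dt u x s) (duh s) i) x)))
      (at s within {0..T})"
    using energy_has_derivative[OF s] by (auto intro!: derivative_eq_intros)
  show "2 * (\<Sum>i<N. integral {xl i..xl i + h} (\<lambda>x. poly (proj_err k a b N (\<lambda>x. u x s) (uh s) i) x *
                                                 poly (proj_err k a b N (\<lambda>x. Dt u x s) (duh s) i) x))
      \<le> A * (energy s + H)"
    using noes_fixed_time.energy_inequality[OF fixed_time[OF s]] unfolding energy_def .
qed

lemma initial_energy: "energy 0 \<le> (b - a) * (Ce * B)\<^sup>2 * H"
proof -
  have "energy 0 \<le> (\<Sum>i<N. h * (Ce * B * h ^ Suc k)\<^sup>2)"
    unfolding energy_def
  proof (rule sum_mono)
    fix i assume "i \<in> {..<N}"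
    hence i: "i < N" by simp
    have "integral {xl i..xl i + h} (\<lambda>x. (poly (proj_err k a b N (\<lambda>x. u x 0) (uh 0) i) x)\<^sup>2)
        \<le> (xl i + h - xl i) * (Ce * B * h ^ Suc k)\<^sup>2"
      unfolding proj_err_def
    proof (rule l2_projection_error_le[where k = k])
      show "degree (radau_proj k (xl i) h (\<lambda>x. u x 0) - uh 0 i) \<le> k"
        using degU i degree_radau_proj[OF h_pos] T by (auto intro!: degree_diff_le)
      show "\<forall>x\<in>{xl i..xl i + h}. \<bar>u x 0 - poly (radau_proj k (xl i) h (\<lambda>x. u x 0)) x\<bar> \<le> Ce * B * h ^ Suc k"
        using noes_fixed_time.radau_error_u[OF fixed_time, of 0 i] i T by auto
    qed (use init i h_pos smooth2_continuous_on_x[OF smooth, of _ "[]" 0] in \<open>auto simp: xR_eq\<close>)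
    thus "integral {xl i..xl i + h} (\<lambda>x. (poly (proj_err k a b N (\<lambda>x. u x 0) (uh 0) i) x)\<^sup>2)
        \<le> h * (Ce * B * h ^ Suc k)\<^sup>2" by simp
  qed
  also have "\<dots> = (b - a) * (Ce * B)\<^sup>2 * H"
    using real_mult_hh[OF N1, of a b] power_Suc_sq[of h k] by (simp add: power_mult_distrib)
  finally show ?thesis .
qed

lemma l2_error_sq_le:
  assumes t: "t \<in> {0..T}"
  shows "(\<Sum>i<N. integral {xL a b N i..xR a b N i} (\<lambda>x. (u x t - poly (uh t i) x)\<^sup>2))
       \<le> 2 * ((b - a) * (Ce * B)\<^sup>2 * H) + 2 * energy t"
proof -
  define \<epsilon> where "\<epsilon> = Ce * B * h ^ Suc k"
  have cell: "integral {xl i..xl i + h} (\<lambda>x. (u x t - poly (uh t i) x)\<^sup>2)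
      \<le> 2 * (h * \<epsilon>\<^sup>2) + 2 * integral {xl i..xl i + h} (\<lambda>x. (poly (proj_err k a b N (\<lambda>x. u x t) (uh t) i) x)\<^sup>2)"
    if i: "i < N" for i
  proof -
    let ?\<xi> = "proj_err k a b N (\<lambda>x. u x t) (uh t) i"
    have "integral {xl i..xl i + h} (\<lambda>x. (u x t - poly (uh t i) x)\<^sup>2)
        \<le> integral {xl i..xl i + h} (\<lambda>x. 2 * \<epsilon>\<^sup>2 + 2 * (poly ?\<xi> x)\<^sup>2)"
    proof (rule integral_le_continuous)
      fix x assume "xl i \<le> x" "x \<le> xl i + h"
      hence "\<bar>u x t - poly (radau_proj k (xl i) h (\<lambda>x. u x t)) x\<bar> \<le> \<epsilon>"
        using noes_fixed_time.radau_error_u[OF fixed_time[OF t] i] unfolding \<epsilon>_def by blast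
      hence "(u x t - poly (radau_proj k (xl i) h (\<lambda>x. u x t)) x)\<^sup>2 \<le> \<epsilon>\<^sup>2"
        by (meson abs_ge_self abs_le_square_iff order_trans)
      moreover have "(X + Y)\<^sup>2 \<le> 2 * X\<^sup>2 + 2 * Y\<^sup>2" for X Y :: real
        using zero_le_power2[of "X - Y"] by (simp add: power2_eq_square algebra_simps)
      moreover have "u x t - poly (uh t i) x = (u x t - poly (radau_proj k (xl i) h (\<lambda>x. u x t)) x) + poly ?\<xi> x"
        unfolding proj_err_def by simp
      ultimately show "(u x t - poly (uh t i) x)\<^sup>2 \<le> 2 * \<epsilon>\<^sup>2 + 2 * (poly ?\<xi> x)\<^sup>2"
        by (smt (verit))
    qed (auto intro!: continuous_intros smooth2_continuous_on_x[OF smooth, of _ "[]" t, simplified])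
    also have "\<dots> = 2 * (h * \<epsilon>\<^sup>2) + 2 * integral {xl i..xl i + h} (\<lambda>x. (poly ?\<xi> x)\<^sup>2)"
      using h_pos by (subst integral_add) (auto intro!: integrable_continuous_interval continuous_intros)
    finally show ?thesis .
  qed
  have "(\<Sum>i<N. integral {xL a b N i..xR a b N i} (\<lambda>x. (u x t - poly (uh t i) x)\<^sup>2))
      \<le> (\<Sum>i<N. 2 * (h * \<epsilon>\<^sup>2)
            + 2 * integral {xl i..xl i + h} (\<lambda>x. (poly (proj_err k a b N (\<lambda>x. u x t) (uh t) i) x)\<^sup>2))"
    unfolding xR_eq by (intro sum_mono cell) simp
  also have "\<dots> = 2 * (real N * (h * \<epsilon>\<^sup>2)) + 2 * energy t"
    unfolding energy_def by (simp add: sum.distrib sum_distrib_left)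
  also have "real N * (h * \<epsilon>\<^sup>2) = (b - a) * (Ce * B)\<^sup>2 * H"
    unfolding \<epsilon>_def using real_mult_hh[OF N1, of a b] power_Suc_sq[of h k]
    by (simp add: power_mult_distrib)
  finally show ?thesis .
qed

definition error_const :: real where
  "error_const = 2 * ((b - a) * (Ce * B)\<^sup>2) + 2 * ((b - a) * (Ce * B)\<^sup>2 + 1) * exp (A * T)"

lemma l2_error_bound:
  assumes t: "t \<in> {0..T}"
  shows "l2err a b N (\<lambda>x. u x t) (uh t) \<le> sqrt error_const * h ^ (k + 1)"
proof -
  define E where "E = (b - a) * (Ce * B)\<^sup>2"
  have "0 \<le> H" using h_pos by simp
  have "energy t \<le> (energy 0 + H) * exp (A * t)" using energy_growth[OF t] \<open>0 \<le> H\<close> by linarith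
  also have "\<dots> \<le> (E * H + H) * exp (A * T)"
    using initial_energy A_nonneg t \<open>0 \<le> H\<close> ab unfolding E_def
    by (intro mult_mono) (auto intro!: mult_left_mono)
  finally have "(\<Sum>i<N. integral {xL a b N i..xR a b N i} (\<lambda>x. (u x t - poly (uh t i) x)\<^sup>2))
      \<le> error_const * H"
    using l2_error_sq_le[OF t] unfolding error_const_def E_def by (simp add: algebra_simps)
  hence "l2err a b N (\<lambda>x. u x t) (uh t) \<le> sqrt (error_const * H)"
    unfolding l2err_def by (rule real_sqrt_le_mono)
  also have "sqrt (error_const * H) = sqrt error_const * sqrt ((h ^ (k + 1))\<^sup>2)"
    using power_Suc_sq[of h k] by (simp only: Suc_eq_plus1 real_sqrt_mult)
  also have "sqrt ((h ^ (k + 1))\<^sup>2) = h ^ (k + 1)"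
    using h_pos by simp
  finally show ?thesis .
qed

end

theorem theorem2p3:
  fixes a b T c0 C :: real and k :: nat and u :: "real \<Rightarrow> real \<Rightarrow> real"
  assumes "a < b" and "0 < T" and "1 \<le> k" and "0 < c0" and "1 < C"
    and "smooth2 u"
    and "\<forall>x. \<forall>t\<in>{0..T}. Dt u x t + Dx u x t = 0"
    and "\<forall>x t. u (x + (b - a)) t = u x t"
  shows "\<exists>M. \<forall>N::nat. \<forall>uh duh :: real \<Rightarrow> nat \<Rightarrow> real poly.
           1 \<le> N
         \<and> (\<forall>t\<in>{0..T}. \<forall>i<N. degree (uh t i) \<le> k)
         \<and> (\<forall>t\<in>{0..T}. \<forall>i<N. \<forall>j. ((\<lambda>s. coeff (uh s i) j) has_real_derivative coeff (duh t i) j)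
                                      (at t within {0..T}))
         \<and> (\<forall>t\<in>{0..T}. \<forall>i<N. \<forall>w. degree w \<le> k \<longrightarrow> noes_eq c0 C k a b N (uh t) (duh t) i w)
         \<and> (\<forall>i<N. \<forall>w. degree w \<le> k \<longrightarrow>
               integral {xL a b N i .. xR a b N i} (\<lambda>x. poly (uh 0 i) x * poly w x)
             = integral {xL a b N i .. xR a b N i} (\<lambda>x. u x 0 * poly w x))
         \<longrightarrow> (\<forall>t\<in>{0..T}. l2err a b N (\<lambda>x. u x t) (uh t) \<le> M * hh a b N ^ (k + 1))"
proof -
  let "\<exists>M. \<forall>N uh duh. ?hyps N uh duh \<longrightarrow> _" = ?thesis
  obtain Ci Ce where "inverse_ineq_const k Ci" "radau_approx_const k Ce"
    using inverse_inequality radau_proj_approx by blast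
  moreover obtain B where "\<forall>m x t. m \<le> k + 2 \<longrightarrow> a \<le> x \<longrightarrow> x \<le> b \<longrightarrow> 0 \<le> t \<longrightarrow> t \<le> T \<longrightarrow> \<bar>Dxn u m x t\<bar> \<le> B"
    using Dxn_bounded[OF assms(6)] by blast
  ultimately have "noes_semidiscrete a b T c0 C k N u uh duh B Ci Ce" if "?hyps N uh duh" for N uh duh
    using that assms by unfold_locales auto
  thus ?thesis
    by (intro exI[of _ "sqrt (noes_semidiscrete.error_const a b T c0 C k B Ci Ce)"] allI impI ballI
          noes_semidiscrete.l2_error_bound)
qed

end
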